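(* For all $m,n\in\mathbb N$, the set $\{\widehat{x}\mid x\text{ a Temperley–Lieb diagram }\mathbf m\to\mathbf n\}$ is a basis of $\mathrm{Hom}_{\mathcal{TL}_0(\Bbbk)}(\mathbf m,\mathbf n)$.
   Context: $\Bbbk$ is a field. $\mathcal{TL}_0(\Bbbk)$ is the strict $\Bbbk$-linear monoidal category with objects $\mathbf 0,\mathbf 1,\dots$, $\mathbf m\otimes\mathbf n=\mathbf{m+n}$, generated by $\mathrm{cup}:\mathbf 0\to\mathbf 2$ and $\mathrm{cap}:\mathbf 2\to\mathbf 0$ subject to $(\mathrm{id}_{\mathbf 1}\otimes\mathrm{cap})\circ(\mathrm{cup}\otimes\mathrm{id}_{\mathbf 1})=0=(\mathrm{cap}\otimes\mathrm{id}_{\mathbf 1})\circ(\mathrm{id}_{\mathbf 1}\otimes\mathrm{cup})$ and $\mathrm{cap}\circ\mathrm{cup}=\mathrm{id}_{\mathbf 0}$. A Temperley–Lieb diagram is a nonzero morphism built from cup, cap and identities by $\otimes,\circ$; a cup (resp. cap) diagram is one built from cup (resp. cap) and identities only. Every Temperley–Lieb diagram $x$ with $k$ through-strands factors uniquely as $x=u\circ v$ with $v:\mathbf m\to\mathbf k$ a cap diagram and $u:\mathbf k\to\mathbf n$ a cup diagram. The Jones–Wenzl projector is $\mathrm{j}_k=\sum_{I}(-1)^{|I|}\mathrm{cup}_{I,k}\circ\mathrm{cap}_{I,k}$, summing over $I\subseteq\{1,\dots,k\}$ with $k\notin I$ and no two consecutive elements, where $\mathrm{cap}_{I,k}$ has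 caps joining $i,i+1$ ($i\in I$) and through-strands elsewhere, and $\mathrm{cup}_{I,k}$ is its reflection. The max-summand morphism of $x=u\circ v$ is $\widehat{x}=u\circ\mathrm{j}_k\circ v$. *)

theory Defs
  imports Main
begin

text \<open>A morphism of the free strict monoidal category on cup : 0 -> 2 and cap : 2 -> 0 is a
word of layers (a, g) = id_a (x) g (x) id_b, read left to right in order of application
(first list element is applied first), modulo the interchange law. The k-linear category
has as Hom(m,n) the free k-vector space on words m -> n, modulo the subspace spanned by
the interchange law and the defining relations placed in arbitrary contexts.\<close>

datatype gen = Cup | Cap

type_synonym layer = "nat \<times> gen"
type_synonym word = "layer list"

fun ins :: "gen \<Rightarrow> nat" where
  "ins Cup = 0" | "ins Cap = 2"

fun outs :: "gen \<Rightarrow> nat" where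
  "outs Cup = 2" | "outs Cap = 0"

fun tgt :: "nat \<Rightarrow> word \<Rightarrow> nat option" where
  "tgt m [] = Some m"
| "tgt m ((a, Cup) # ws) = (if a \<le> m then tgt (m + 2) ws else None)"
| "tgt m ((a, Cap) # ws) = (if a + 2 \<le> m then tgt (m - 2) ws else None)"

definition typed :: "nat \<Rightarrow> nat \<Rightarrow> word \<Rightarrow> bool" where
  "typed m n w \<longleftrightarrow> tgt m w = Some n"

definition dlt :: "word \<Rightarrow> word \<Rightarrow> 'k::field" where
  "dlt w = (\<lambda>v. if v = w then 1 else 0)"

definition free_vec :: "nat \<Rightarrow> nat \<Rightarrow> (word \<Rightarrow> 'k::field) set" where
  "free_vec m n = {f. finite {w. f w \<noteq> 0} \<and> (\<forall>w. f w \<noteq> 0 \<longrightarrow> typed m n w)}"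

definition lin_comb :: "(word \<Rightarrow> 'k::field) set \<Rightarrow> ((word \<Rightarrow> 'k) \<Rightarrow> 'k) \<Rightarrow> (word \<Rightarrow> 'k)" where
  "lin_comb F c = (\<lambda>w. \<Sum>v\<in>F. c v * v w)"

definition lin_span :: "(word \<Rightarrow> 'k::field) set \<Rightarrow> (word \<Rightarrow> 'k) set" where
  "lin_span S = {f. \<exists>F c. finite F \<and> F \<subseteq> S \<and> f = lin_comb F c}"

text \<open>Generating vectors of the kernel: interchange law, cap o cup = id_0, and the two
zigzag relations = 0, each whiskered on both sides and composed with arbitrary words.\<close>
definition rel_vecs :: "nat \<Rightarrow> nat \<Rightarrow> (word \<Rightarrow> 'k::field) set" where
  "rel_vecs m n =
     {(\<lambda>w. dlt (w1 @ [(a, g), (c, h)] @ w2) w - dlt (w1 @ [(c + ins g - outs g, h), (a, g)] @ w2) w)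
       | w1 w2 a g c h. a + outs g \<le> c \<and> typed m n (w1 @ [(a, g), (c, h)] @ w2)}
   \<union> {(\<lambda>w. dlt (w1 @ [(a, Cup), (a, Cap)] @ w2) w - dlt (w1 @ w2) w)
       | w1 w2 a. typed m n (w1 @ [(a, Cup), (a, Cap)] @ w2)}
   \<union> {dlt (w1 @ [(a, Cup), (Suc a, Cap)] @ w2)
       | w1 w2 a. typed m n (w1 @ [(a, Cup), (Suc a, Cap)] @ w2)}
   \<union> {dlt (w1 @ [(Suc a, Cup), (a, Cap)] @ w2)
       | w1 w2 a. typed m n (w1 @ [(Suc a, Cup), (a, Cap)] @ w2)}"

definition tl_ideal :: "nat \<Rightarrow> nat \<Rightarrow> (word \<Rightarrow> 'k::field) set" where
  "tl_ideal m n = lin_span (rel_vecs m n)"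

definition tl_eq :: "nat \<Rightarrow> nat \<Rightarrow> (word \<Rightarrow> 'k::field) \<Rightarrow> (word \<Rightarrow> 'k) \<Rightarrow> bool" where
  "tl_eq m n f g \<longleftrightarrow> (\<lambda>w. f w - g w) \<in> tl_ideal m n"

definition cap_word :: "word \<Rightarrow> bool" where
  "cap_word w \<longleftrightarrow> (\<forall>l\<in>set w. snd l = Cap)"

definition cup_word :: "word \<Rightarrow> bool" where
  "cup_word w \<longleftrightarrow> (\<forall>l\<in>set w. snd l = Cup)"

definition adm :: "nat \<Rightarrow> nat set set" where
  "adm k = {I. I \<subseteq> {1..k} \<and> k \<notin> I \<and> (\<forall>i\<in>I. Suc i \<notin> I)}"

definition capI :: "nat set \<Rightarrow> word" where
  "capI I = map (\<lambda>i. (i - 1, Cap)) (rev (sorted_list_of_set I))"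

definition cupI :: "nat set \<Rightarrow> word" where
  "cupI I = map (\<lambda>i. (i - 1, Cup)) (sorted_list_of_set I)"

text \<open>u o j_k o v for a cap word v : m -> k and a cup word u : k -> n.\<close>
definition hat_vec :: "word \<Rightarrow> nat \<Rightarrow> word \<Rightarrow> (word \<Rightarrow> 'k::field)" where
  "hat_vec v k u = (\<lambda>w. \<Sum>I\<in>adm k. (- 1) ^ card I * dlt (v @ capI I @ cupI I @ u) w)"

text \<open>Representatives of the max-summand morphisms x-hat of all TL diagrams x : m -> n,
computed from the cap/cup factorisation x = u o v. A TL diagram is the class of a
single word w that is nonzero in Hom(m,n).\<close>
definition hat_set :: "nat \<Rightarrow> nat \<Rightarrow> (word \<Rightarrow> 'k::field) set" where
  "hat_set m n = {hat_vec v k u | w v k u.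
      typed m n w \<and> \<not> tl_eq m n (dlt w) (\<lambda>_. 0 :: 'k) \<and> cap_word v \<and> cup_word u \<and> typed m k v \<and> typed k n u
      \<and> tl_eq m n (dlt w :: word \<Rightarrow> 'k) (dlt (v @ u))}"

definition basis_of_hom :: "nat \<Rightarrow> nat \<Rightarrow> (word \<Rightarrow> 'k::field) set \<Rightarrow> bool" where
  "basis_of_hom m n B \<longleftrightarrow>
     B \<subseteq> free_vec m n
   \<and> (\<forall>f\<in>free_vec m n. \<exists>F c. finite F \<and> F \<subseteq> B \<and> tl_eq m n f (lin_comb F c))
   \<and> (\<forall>F c. finite F \<and> F \<subseteq> B \<and> (\<forall>h\<in>F. \<forall>h'\<in>F. h \<noteq> h' \<longrightarrow> \<not> tl_eq m n h h')
        \<and> lin_comb F c \<in> tl_ideal m n \<longrightarrow> (\<forall>h\<in>F. c h = 0))"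

end

theory Submission
  imports Defs
begin

text \<open>Spanning: by the interchange law, loop removal and the vanishing zigzags, every diagram
  is zero or a cap word followed by a cup word, and \<open>x\<close>-hat is \<open>x\<close> plus diagrams with fewer
  through-strands; induction on the number of through-strands writes every diagram in terms of
  max-summand morphisms.

  Independence: reading a word layer by layer yields its diagram (the caps among the input points
  and the sequence of output points), or fails at a zigzag. This is invariant under the relations,
  so for each diagram the sum of the coefficients of the words with that diagram is a functional
  vanishing on the relations. Cap-cup words with the same diagram are equal modulo the relations,
  and \<open>x\<close>-hat is triangular with respect to the number of through-strands, so the functional of
  the diagram of a summand with the most through-strands isolates its coefficient.\<close>

lemma lin_comb_insert:
  "finite F \<Longrightarrow> x \<notin> F \<Longrightarrow> lin_comb (insert x F) c = (\<lambda>w. lin_comb F c w + c x * x w)"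
  unfolding lin_comb_def by (rule ext) (simp add: add.commute)

lemma lin_comb_superset:
  assumes "finite H" "F \<subseteq> H"
  shows "lin_comb F c = lin_comb H (\<lambda>v. if v \<in> F then c v else 0)"
  unfolding lin_comb_def by (rule ext, rule sum.mono_neutral_cong_left) (use assms in auto)

lemma lin_comb_add:
  "(\<lambda>w. lin_comb H c w + a * lin_comb H d w) = lin_comb H (\<lambda>v. c v + a * d v)"
  by (rule ext) (simp add: lin_comb_def sum.distrib sum_distrib_left algebra_simps)

lemma lin_span_zero: "(\<lambda>_. 0) \<in> lin_span S"
  unfolding lin_span_def lin_comb_def by (auto intro!: exI[of _ "{}"])

lemma lin_span_base: "s \<in> S \<Longrightarrow> s \<in> lin_span S"
  unfolding lin_span_def lin_comb_def by (auto intro!: exI[of _ "{s}"] exI[of _ "\<lambda>_. 1"])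

lemma lin_span_add:
  assumes "f \<in> lin_span S" "g \<in> lin_span S"
  shows "(\<lambda>w. f w + a * g w) \<in> lin_span S"
proof -
  obtain F c where F: "finite F" "F \<subseteq> S" "f = lin_comb F c"
    using assms(1) unfolding lin_span_def by blast
  obtain G d where G: "finite G" "G \<subseteq> S" "g = lin_comb G d"
    using assms(2) unfolding lin_span_def by blast
  have "lin_comb F c = lin_comb (F \<union> G) (\<lambda>v. if v \<in> F then c v else 0)"
    "lin_comb G d = lin_comb (F \<union> G) (\<lambda>v. if v \<in> G then d v else 0)"
    using F(1) G(1) by (auto intro: lin_comb_superset)
  then have "(\<lambda>w. f w + a * g w) =
      lin_comb (F \<union> G) (\<lambda>v. (if v \<in> F then c v else 0) + a * (if v \<in> G then d v else 0))"
    unfolding F(3) G(3) by (simp add: lin_comb_add)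
  then show ?thesis using F G unfolding lin_span_def by blast
qed

lemma lin_span_scale: "f \<in> lin_span S \<Longrightarrow> (\<lambda>w. a * f w) \<in> lin_span S"
  using lin_span_add[OF lin_span_zero, of f S a] by simp

lemma lin_span_sum:
  "finite A \<Longrightarrow> (\<And>x. x \<in> A \<Longrightarrow> g x \<in> lin_span S) \<Longrightarrow> (\<lambda>w. \<Sum>x\<in>A. g x w) \<in> lin_span S"
proof (induction A rule: finite_induct)
  case empty
  then show ?case using lin_span_zero by simp
next
  case (insert x F)
  then have "(\<lambda>w. (\<Sum>x\<in>F. g x w) + 1 * g x w) \<in> lin_span S"
    by (intro lin_span_add) auto
  then show ?case using insert(1,2) by (simp add: add.commute)
qed

lemma lin_span_induct[consumes 1, case_names zero add]:
  assumes "f \<in> lin_span S" "P (\<lambda>_. 0)"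
    "\<And>f s a. f \<in> lin_span S \<Longrightarrow> P f \<Longrightarrow> s \<in> S \<Longrightarrow> P (\<lambda>w. f w + a * s w)"
  shows "P f"
proof -
  obtain F c where F: "finite F" "F \<subseteq> S" "f = lin_comb F c"
    using assms(1) unfolding lin_span_def by blast
  have "P (lin_comb F c)" using F(1,2)
  proof (induction F rule: finite_induct)
    case empty
    then show ?case using assms(2) by (simp add: lin_comb_def)
  next
    case (insert x F)
    then have "lin_comb F c \<in> lin_span S" unfolding lin_span_def by blast
    with insert show ?case using assms(3) by (simp add: lin_comb_insert)
  qed
  then show ?thesis using F(3) by simp
qed

lemma finite_support_add:
  assumes "finite {w. f w \<noteq> 0}" "finite {w. g w \<noteq> 0}"
  shows "finite {w. f w + a * g w \<noteq> (0::'k::field)}"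
  by (rule finite_subset[of _ "{w. f w \<noteq> 0} \<union> {w. g w \<noteq> 0}"]) (use assms in auto)

lemma finite_support_sum:
  "finite A \<Longrightarrow> (\<And>i. i \<in> A \<Longrightarrow> finite {w. g i w \<noteq> 0}) \<Longrightarrow>
    finite {w. (\<Sum>i\<in>A. c i * g i w) \<noteq> (0::'k::field)}"
proof (induction A rule: finite_induct)
  case (insert x F)
  then show ?case using finite_support_add[of "\<lambda>w. \<Sum>i\<in>F. c i * g i w" "g x" "c x"]
    by (simp add: add.commute)
qed simp

lemma finite_support_lin_span:
  "(\<And>s. s \<in> S \<Longrightarrow> finite {w. s w \<noteq> 0}) \<Longrightarrow> f \<in> lin_span S \<Longrightarrow> finite {w. f w \<noteq> (0::'k::field)}"
  unfolding lin_span_def lin_comb_def by (auto intro!: finite_support_sum)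

lemma finite_support_dlt: "finite {w. dlt x w \<noteq> (0::'k::field)}"
  by (rule finite_subset[of _ "{x}"]) (auto simp: dlt_def)

lemma tl_eq_refl: "tl_eq m n f f"
  unfolding tl_eq_def tl_ideal_def using lin_span_zero by simp

lemma tl_eq_sym: "tl_eq m n f g \<Longrightarrow> tl_eq m n g f"
  unfolding tl_eq_def tl_ideal_def using lin_span_scale[of _ _ "-1"] by fastforce

lemma tl_eq_trans[trans]: "tl_eq m n f g \<Longrightarrow> tl_eq m n g h \<Longrightarrow> tl_eq m n f h"
  unfolding tl_eq_def tl_ideal_def using lin_span_add[of _ _ _ 1] by fastforce

lemma tl_eq_add:
  assumes "tl_eq m n f g" "tl_eq m n f' g'"
  shows "tl_eq m n (\<lambda>w. f w + a * f' w) (\<lambda>w. g w + a * g' w)"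
proof -
  have "(\<lambda>w. (f w - g w) + a * (f' w - g' w)) \<in> tl_ideal m n"
    using assms unfolding tl_eq_def tl_ideal_def by (rule lin_span_add)
  then show ?thesis unfolding tl_eq_def by (simp add: algebra_simps)
qed

lemma tl_eq_scale: "tl_eq m n f g \<Longrightarrow> tl_eq m n (\<lambda>w. a * f w) (\<lambda>w. a * g w)"
  using tl_eq_add[OF tl_eq_refl[of m n "\<lambda>_. 0"]] by simp

lemma tl_eq_sum:
  assumes "finite A" "\<And>x. x \<in> A \<Longrightarrow> tl_eq m n (f x) (g x)"
  shows "tl_eq m n (\<lambda>w. \<Sum>x\<in>A. f x w) (\<lambda>w. \<Sum>x\<in>A. g x w)"
proof -
  have "(\<lambda>w. \<Sum>x\<in>A. f x w - g x w) \<in> tl_ideal m n"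
    using assms unfolding tl_eq_def tl_ideal_def by (intro lin_span_sum) auto
  then show ?thesis unfolding tl_eq_def by (simp add: sum_subtractf)
qed

lemma tgt_append: "tgt m (x @ y) = (case tgt m x of None \<Rightarrow> None | Some k \<Rightarrow> tgt k y)"
  by (induction m x rule: tgt.induct) auto

lemma typed_append: "typed m k x \<Longrightarrow> typed k n y \<Longrightarrow> typed m n (x @ y)"
  by (simp add: typed_def tgt_append)

lemma typed_appendE:
  assumes "typed m n (x @ y)"
  obtains k where "typed m k x" "typed k n y"
  using assms by (auto simp: typed_def tgt_append split: option.splits)

lemma typed_Nil[simp]: "typed m n [] \<longleftrightarrow> n = m"
  by (auto simp: typed_def)

lemma typed_Nil_refl: "typed n n []"
  by simp

lemma typed_Cup_Cons[simp]: "typed m n ((a, Cup) # w) \<longleftrightarrow> a \<le> m \<and> typed (m + 2) n w"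
  by (auto simp: typed_def)

lemma typed_Cap_Cons[simp]: "typed m n ((a, Cap) # w) \<longleftrightarrow> a + 2 \<le> m \<and> typed (m - 2) n w"
  by (auto simp: typed_def)

lemma typed_snoc: "typed m n (w @ [x]) \<longleftrightarrow> (\<exists>k. typed m k w \<and> typed k n [x])"
  by (auto simp: typed_def tgt_append split: option.splits)

lemma cap_word_simps[simp]:
  "cap_word []" "cap_word (x # w) \<longleftrightarrow> snd x = Cap \<and> cap_word w"
  "cap_word (v @ w) \<longleftrightarrow> cap_word v \<and> cap_word w"
  by (auto simp: cap_word_def)

lemma cup_word_simps[simp]:
  "cup_word []" "cup_word (x # w) \<longleftrightarrow> snd x = Cup \<and> cup_word w"
  "cup_word (v @ w) \<longleftrightarrow> cup_word v \<and> cup_word w"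
  by (auto simp: cup_word_def)

lemma cap_word_typed_length: "cap_word v \<Longrightarrow> typed m k v \<Longrightarrow> m = k + 2 * length v"
proof (induction v arbitrary: m)
  case (Cons x v)
  then obtain a where "x = (a, Cap)" by (cases x) auto
  with Cons show ?case by fastforce
qed simp

lemma cup_word_typed_length: "cup_word u \<Longrightarrow> typed m n u \<Longrightarrow> n = m + 2 * length u"
proof (induction u arbitrary: m)
  case (Cons x u)
  then obtain a where "x = (a, Cup)" by (cases x) auto
  with Cons show ?case by fastforce
qed simp

definition whisker :: "word \<Rightarrow> word \<Rightarrow> (word \<Rightarrow> 'k::field) \<Rightarrow> (word \<Rightarrow> 'k)" where
  "whisker p s f = (\<lambda>w. if \<exists>x. w = p @ x @ s then f (THE x. w = p @ x @ s) else 0)"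

lemma whisker_dlt: "whisker p s (dlt x) = dlt (p @ x @ s)"
  by (rule ext) (auto simp: whisker_def dlt_def)

lemma whisker_add: "whisker p s (\<lambda>w. f w + a * g w) = (\<lambda>w. whisker p s f w + a * whisker p s g w)"
  by (auto simp: whisker_def)

lemma whisker_diff: "whisker p s (\<lambda>w. f w - g w) = (\<lambda>w. whisker p s f w - whisker p s g w)"
  by (auto simp: whisker_def)

lemma whisker_zero: "whisker p s (\<lambda>_. 0) = (\<lambda>_. 0)"
  by (auto simp: whisker_def)

lemma rel_vecs_whisker:
  assumes "r \<in> rel_vecs k k'" "typed m k p" "typed k' n s"
  shows "whisker p s r \<in> rel_vecs m n"
proof -
  have typed: "typed m n ((p @ w1) @ x @ (w2 @ s))" if "typed k k' (w1 @ x @ w2)" for w1 x w2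
    using typed_append[OF typed_append[OF assms(2) that] assms(3)] by simp
  have whisker_rel: "whisker p s (\<lambda>w. dlt (w1 @ x @ w2) w - dlt (w1 @ y @ w2) w)
      = (\<lambda>w. dlt ((p @ w1) @ x @ (w2 @ s)) w - dlt ((p @ w1) @ y @ (w2 @ s)) w)" for w1 x y w2
    by (simp add: whisker_diff whisker_dlt)
  have whisker_gen: "whisker p s (dlt (w1 @ x @ w2)) = dlt ((p @ w1) @ x @ (w2 @ s))" for w1 x w2
    by (simp add: whisker_dlt)
  from assms(1)[unfolded rel_vecs_def] show ?thesis
  proof (elim UnE CollectE exE conjE)
    fix w1 w2 a g c h
    assume r: "r = (\<lambda>w. dlt (w1 @ [(a, g), (c, h)] @ w2) w - dlt (w1 @ [(c + ins g - outs g, h), (a, g)] @ w2) w)"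
      and "a + outs g \<le> c" "typed k k' (w1 @ [(a, g), (c, h)] @ w2)"
    then show ?thesis unfolding rel_vecs_def r whisker_rel by (blast intro: typed)
  next
    fix w1 w2 a
    assume r: "r = (\<lambda>w. dlt (w1 @ [(a, Cup), (a, Cap)] @ w2) w - dlt (w1 @ w2) w)"
      and "typed k k' (w1 @ [(a, Cup), (a, Cap)] @ w2)"
    moreover have "whisker p s r = (\<lambda>w. dlt ((p @ w1) @ [(a, Cup), (a, Cap)] @ (w2 @ s)) w
        - dlt ((p @ w1) @ (w2 @ s)) w)"
      unfolding r by (simp add: whisker_diff whisker_dlt)
    ultimately show ?thesis unfolding rel_vecs_def by (blast intro: typed)
  next
    fix w1 w2 a
    assume r: "r = dlt (w1 @ [(a, Cup), (Suc a, Cap)] @ w2)" and "typed k k' (w1 @ [(a, Cup), (Suc a, Cap)] @ w2)"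
    then show ?thesis unfolding rel_vecs_def r whisker_gen by (blast intro: typed)
  next
    fix w1 w2 a
    assume r: "r = dlt (w1 @ [(Suc a, Cup), (a, Cap)] @ w2)" and "typed k k' (w1 @ [(Suc a, Cup), (a, Cap)] @ w2)"
    then show ?thesis unfolding rel_vecs_def r whisker_gen by (blast intro: typed)
  qed
qed

lemma tl_ideal_whisker:
  assumes "f \<in> tl_ideal k k'" "typed m k p" "typed k' n s"
  shows "whisker p s f \<in> tl_ideal m n"
  using assms(1) unfolding tl_ideal_def
proof (induction rule: lin_span_induct)
  case zero
  then show ?case by (simp add: whisker_zero lin_span_zero)
next
  case (add f r a)
  then show ?case
    unfolding whisker_add using rel_vecs_whisker[OF _ assms(2,3)] by (blast intro: lin_span_add lin_span_base)
qed

lemma tl_eq_whisker: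
  assumes "tl_eq k k' f g" "typed m k p" "typed k' n s"
  shows "tl_eq m n (whisker p s f) (whisker p s g)"
  using tl_ideal_whisker[OF assms(1)[unfolded tl_eq_def] assms(2,3)] unfolding tl_eq_def whisker_diff .

lemma tl_eq_whisker_dlt:
  assumes "tl_eq k k' (dlt x :: word \<Rightarrow> 'k::field) (dlt y)" "typed m k p" "typed k' n s"
  shows "tl_eq m n (dlt (p @ x @ s) :: word \<Rightarrow> 'k) (dlt (p @ y @ s))"
  using tl_eq_whisker[OF assms] by (simp only: whisker_dlt)

lemma tl_eq_whisker_dlt_zero:
  assumes "tl_eq k k' (dlt x) (\<lambda>_. 0 :: 'k::field)" "typed m k p" "typed k' n s"
  shows "tl_eq m n (dlt (p @ x @ s)) (\<lambda>_. 0 :: 'k)"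
  using tl_eq_whisker[OF assms] by (simp only: whisker_dlt whisker_zero)

lemma tl_eq_prepend_dlt:
  assumes "typed m k p" "tl_eq k n (dlt x :: word \<Rightarrow> 'k::field) (dlt y)"
  shows "tl_eq m n (dlt (p @ x) :: word \<Rightarrow> 'k) (dlt (p @ y))"
  using tl_eq_whisker_dlt[OF assms(2,1) typed_Nil_refl] by simp

lemma tl_eq_append_dlt:
  assumes "tl_eq k k' (dlt x :: word \<Rightarrow> 'k::field) (dlt y)" "typed k' n s"
  shows "tl_eq k n (dlt (x @ s) :: word \<Rightarrow> 'k) (dlt (y @ s))"
  using tl_eq_whisker_dlt[OF assms(1) typed_Nil_refl assms(2)] by simp

lemma tl_eq_prepend_dlt_zero:
  assumes "typed m k p" "tl_eq k n (dlt x) (\<lambda>_. 0 :: 'k::field)"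
  shows "tl_eq m n (dlt (p @ x)) (\<lambda>_. 0 :: 'k)"
  using tl_eq_whisker_dlt_zero[OF assms(2,1) typed_Nil_refl] by simp

lemma tl_eq_append_dlt_zero:
  assumes "tl_eq k k' (dlt x) (\<lambda>_. 0 :: 'k::field)" "typed k' n s"
  shows "tl_eq k n (dlt (x @ s)) (\<lambda>_. 0 :: 'k)"
  using tl_eq_whisker_dlt_zero[OF assms(1) typed_Nil_refl assms(2)] by simp

lemma rel_vecs_in_tl_ideal: "r \<in> rel_vecs m n \<Longrightarrow> r \<in> tl_ideal m n"
  unfolding tl_ideal_def by (rule lin_span_base)

lemma tl_eq_interchange:
  assumes "a + outs g \<le> c" "typed m n [(a, g), (c, h)]"
  shows "tl_eq m n (dlt [(a, g), (c, h)] :: word \<Rightarrow> 'k::field) (dlt [(c + ins g - outs g, h), (a, g)])"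
proof -
  have "(\<lambda>w. dlt ([] @ [(a, g), (c, h)] @ []) w - dlt ([] @ [(c + ins g - outs g, h), (a, g)] @ []) w :: 'k)
      \<in> rel_vecs m n"
    unfolding rel_vecs_def by (rule UnI1, rule UnI1, rule UnI1, rule CollectI) (use assms in fastforce)
  then show ?thesis unfolding tl_eq_def using rel_vecs_in_tl_ideal by simp
qed

lemma tl_eq_loop:
  assumes "typed m n [(a, Cup), (a, Cap)]"
  shows "tl_eq m n (dlt [(a, Cup), (a, Cap)] :: word \<Rightarrow> 'k::field) (dlt [])"
proof -
  have "(\<lambda>w. dlt ([] @ [(a, Cup), (a, Cap)] @ []) w - dlt ([] @ []) w :: 'k) \<in> rel_vecs m n"
    unfolding rel_vecs_def by (rule UnI1, rule UnI1, rule UnI2, rule CollectI) (use assms in fastforce)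
  then show ?thesis unfolding tl_eq_def using rel_vecs_in_tl_ideal by simp
qed

lemma tl_eq_zigzag:
  assumes "b = Suc a \<or> a = Suc b" "typed m n [(b, Cup), (a, Cap)]"
  shows "tl_eq m n (dlt [(b, Cup), (a, Cap)]) (\<lambda>_. 0 :: 'k::field)"
proof -
  have "(dlt ([] @ [(b, Cup), (a, Cap)] @ []) :: word \<Rightarrow> 'k) \<in> rel_vecs m n"
    using assms(1)
  proof
    assume "b = Suc a"
    show ?thesis
      unfolding rel_vecs_def by (rule UnI2, rule CollectI) (use \<open>b = Suc a\<close> assms(2) in fastforce)
  next
    assume "a = Suc b"
    show ?thesis
      unfolding rel_vecs_def by (rule UnI1, rule UnI2, rule CollectI) (use \<open>a = Suc b\<close> assms(2) in fastforce)
  qed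
  then show ?thesis unfolding tl_eq_def using rel_vecs_in_tl_ideal by simp
qed

text \<open>The index of the strand pair starting at \<open>p\<close> once the disjoint pair starting at \<open>b\<close>
  has been removed; the interchange law moves layers past each other by these shifts.\<close>

definition shift_past :: "nat \<Rightarrow> nat \<Rightarrow> nat" where
  "shift_past b p = (if b < p then p - 2 else p)"

abbreviation disjoint_pairs :: "nat \<Rightarrow> nat \<Rightarrow> bool" where
  "disjoint_pairs a b \<equiv> a + 2 \<le> b \<or> b + 2 \<le> a"

lemma tl_eq_swap_Cup_Cap:
  assumes "disjoint_pairs a b" "typed k n [(b, Cup), (a, Cap)]"
  shows "typed k (k - 2) [(shift_past b a, Cap)]" "typed (k - 2) n [(shift_past a b, Cup)]"
    "tl_eq k n (dlt [(b, Cup), (a, Cap)] :: word \<Rightarrow> 'k::field)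
       (dlt [(shift_past b a, Cap), (shift_past a b, Cup)])"
proof -
  show "typed k (k - 2) [(shift_past b a, Cap)]" "typed (k - 2) n [(shift_past a b, Cup)]"
    using assms by (auto simp: shift_past_def)
  show "tl_eq k n (dlt [(b, Cup), (a, Cap)] :: word \<Rightarrow> 'k)
      (dlt [(shift_past b a, Cap), (shift_past a b, Cup)])"
  proof (cases "b < a")
    case True
    then show ?thesis
      using tl_eq_interchange[of b Cup a k n Cap] assms by (simp add: shift_past_def)
  next
    case False
    then have shifts: "shift_past b a = a" "shift_past a b = b - 2"
      using assms(1) by (auto simp: shift_past_def)
    have "typed k n [(a, Cap), (b - 2, Cup)]" "a + outs Cap \<le> b - 2" "Suc (Suc (b - 2)) = b"
      using assms False by auto
    then have "tl_eq k n (dlt [(a, Cap), (b - 2, Cup)] :: word \<Rightarrow> 'k) (dlt [(b, Cup), (a, Cap)])"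
      using tl_eq_interchange[of a Cap "b - 2" k n Cup] by simp
    then show ?thesis unfolding shifts by (rule tl_eq_sym)
  qed
qed

lemma tl_eq_swap_Cap_Cap:
  assumes "disjoint_pairs a b" "typed k n [(b, Cap), (shift_past b a, Cap)]"
  shows "typed k (k - 2) [(a, Cap)]" "typed (k - 2) n [(shift_past a b, Cap)]"
    "tl_eq k n (dlt [(b, Cap), (shift_past b a, Cap)] :: word \<Rightarrow> 'k::field)
       (dlt [(a, Cap), (shift_past a b, Cap)])"
proof -
  show "typed k (k - 2) [(a, Cap)]" "typed (k - 2) n [(shift_past a b, Cap)]"
    using assms by (auto simp: shift_past_def split: if_splits)
  show "tl_eq k n (dlt [(b, Cap), (shift_past b a, Cap)] :: word \<Rightarrow> 'k)
      (dlt [(a, Cap), (shift_past a b, Cap)])"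
  proof (cases "b < a")
    case True
    then have shifts: "shift_past b a = a - 2" "shift_past a b = b"
      using assms(1) by (auto simp: shift_past_def)
    have "typed k n [(b, Cap), (a - 2, Cap)]" "b + outs Cap \<le> a - 2" "a - 2 + 2 = a"
      using assms True shifts by auto
    then show ?thesis
      unfolding shifts using tl_eq_interchange[of b Cap "a - 2" k n Cap] by simp
  next
    case False
    then have shifts: "shift_past b a = a" "shift_past a b = b - 2"
      using assms(1) by (auto simp: shift_past_def)
    have "typed k n [(a, Cap), (b - 2, Cap)]" "a + outs Cap \<le> b - 2" "b - 2 + 2 = b"
      using assms False shifts by auto
    then have "tl_eq k n (dlt [(a, Cap), (b - 2, Cap)] :: word \<Rightarrow> 'k) (dlt [(b, Cap), (a, Cap)])"
      using tl_eq_interchange[of a Cap "b - 2" k n Cap] by simp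
    then show ?thesis unfolding shifts by (rule tl_eq_sym)
  qed
qed

lemma tl_eq_swap_Cup_Cup:
  assumes "disjoint_pairs a c" "typed k n [(shift_past c a, Cup), (c, Cup)]"
  shows "typed k (k + 2) [(shift_past a c, Cup)]" "typed (k + 2) n [(a, Cup)]"
    "tl_eq k n (dlt [(shift_past c a, Cup), (c, Cup)] :: word \<Rightarrow> 'k::field)
       (dlt [(shift_past a c, Cup), (a, Cup)])"
proof -
  show "typed k (k + 2) [(shift_past a c, Cup)]" "typed (k + 2) n [(a, Cup)]"
    using assms by (auto simp: shift_past_def split: if_splits)
  show "tl_eq k n (dlt [(shift_past c a, Cup), (c, Cup)] :: word \<Rightarrow> 'k)
      (dlt [(shift_past a c, Cup), (a, Cup)])"
  proof (cases "c < a")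
    case True
    then have shifts: "shift_past c a = a - 2" "shift_past a c = c"
      using assms(1) by (auto simp: shift_past_def)
    have "typed k n [(c, Cup), (a, Cup)]" "c + outs Cup \<le> a"
      using assms True shifts by auto
    then have "tl_eq k n (dlt [(c, Cup), (a, Cup)] :: word \<Rightarrow> 'k) (dlt [(a - 2, Cup), (c, Cup)])"
      using tl_eq_interchange[of c Cup a k n Cup] by simp
    then show ?thesis unfolding shifts by (rule tl_eq_sym)
  next
    case False
    then have shifts: "shift_past c a = a" "shift_past a c = c - 2"
      using assms(1) by (auto simp: shift_past_def)
    have "typed k n [(a, Cup), (c, Cup)]" "a + outs Cup \<le> c"
      using assms False shifts by auto
    then show ?thesis
      unfolding shifts using tl_eq_interchange[of a Cup c k n Cup] by simp
  qed
qed

section \<open>Normal form of diagrams\<close>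

definition normalizable :: "nat \<Rightarrow> nat \<Rightarrow> (word \<Rightarrow> 'k::field) \<Rightarrow> bool" where
  "normalizable m n f \<longleftrightarrow> tl_eq m n f (\<lambda>_. 0) \<or>
     (\<exists>v k u. cap_word v \<and> cup_word u \<and> typed m k v \<and> typed k n u \<and> tl_eq m n f (dlt (v @ u)))"

lemma normalizable_tl_eq: "tl_eq m n f g \<Longrightarrow> normalizable m n g \<Longrightarrow> normalizable m n f"
  unfolding normalizable_def by (meson tl_eq_trans)

lemma normalizable_zero: "tl_eq m n f (\<lambda>_. 0) \<Longrightarrow> normalizable m n f"
  unfolding normalizable_def by blast

lemma normalizable_cap_cup:
  "cap_word v \<Longrightarrow> cup_word u \<Longrightarrow> typed m k v \<Longrightarrow> typed k n u \<Longrightarrow> normalizable m n (dlt (v @ u))"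
  unfolding normalizable_def using tl_eq_refl by blast

lemma normalizable_whisker:
  assumes "normalizable k k' (dlt x :: word \<Rightarrow> 'k::field)" "cap_word p" "cup_word s"
    "typed m k p" "typed k' n s"
  shows "normalizable m n (dlt (p @ x @ s) :: word \<Rightarrow> 'k)"
  using assms(1)[unfolded normalizable_def]
proof (elim disjE exE conjE)
  assume "tl_eq k k' (dlt x) (\<lambda>_. 0 :: 'k)"
  then show ?thesis by (simp add: normalizable_zero tl_eq_whisker_dlt_zero assms(4,5))
next
  fix v j u
  assume vu: "cap_word v" "cup_word u" "typed k j v" "typed j k' u" "tl_eq k k' (dlt x :: word \<Rightarrow> 'k) (dlt (v @ u))"
  have "tl_eq m n (dlt (p @ x @ s) :: word \<Rightarrow> 'k) (dlt ((p @ v) @ (u @ s)))"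
    using tl_eq_whisker_dlt[OF vu(5) assms(4,5)] by simp
  moreover have "normalizable m n (dlt ((p @ v) @ (u @ s)) :: word \<Rightarrow> 'k)"
    using vu assms by (intro normalizable_cap_cup) (auto intro: typed_append)
  ultimately show ?thesis by (rule normalizable_tl_eq)
qed

lemma normalizable_cup_word_Cap:
  assumes "cup_word u" "typed k n (u @ [(a, Cap)])"
  shows "normalizable k n (dlt (u @ [(a, Cap)]) :: word \<Rightarrow> 'k::field)"
  using assms
proof (induction u arbitrary: a n rule: rev_induct)
  case Nil
  then have "normalizable k n (dlt ([(a, Cap)] @ []) :: word \<Rightarrow> 'k)"
    by (intro normalizable_cap_cup[where k = n]) auto
  then show ?case by simp
next
  case (snoc x u)
  obtain b where x: "x = (b, Cup)" using snoc.prems(1) by (cases x) auto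
  obtain j where u: "cup_word u" "typed k j u" and bj: "typed j n [(b, Cup), (a, Cap)]"
    using snoc.prems x by (auto elim: typed_appendE)
  consider "b = a" | "b = Suc a \<or> a = Suc b" | "disjoint_pairs a b" by linarith
  then show ?case
  proof cases
    case 1
    have "tl_eq j n (dlt [(a, Cup), (a, Cap)] :: word \<Rightarrow> 'k) (dlt [])"
      using bj 1 by (intro tl_eq_loop) simp
    then have "tl_eq k n (dlt (u @ [(b, Cup), (a, Cap)]) :: word \<Rightarrow> 'k) (dlt (u @ []))"
      using tl_eq_prepend_dlt[OF u(2)] 1 by blast
    moreover have "normalizable k n (dlt ([] @ u) :: word \<Rightarrow> 'k)"
      using u bj 1 by (intro normalizable_cap_cup) auto
    ultimately show ?thesis using x by (simp add: normalizable_tl_eq)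
  next
    case 2
    have "tl_eq k n (dlt (u @ [(b, Cup), (a, Cap)]) :: word \<Rightarrow> 'k) (\<lambda>_. 0)"
      using tl_eq_prepend_dlt_zero[OF u(2) tl_eq_zigzag[OF 2 bj]] .
    then show ?thesis using x by (simp add: normalizable_zero)
  next
    case 3
    note swap = tl_eq_swap_Cup_Cap[OF 3 bj]
    have "tl_eq k n (dlt (u @ [(b, Cup), (a, Cap)]) :: word \<Rightarrow> 'k)
        (dlt (u @ [(shift_past b a, Cap), (shift_past a b, Cup)]))"
      using tl_eq_prepend_dlt[OF u(2) swap(3)] .
    moreover have "normalizable k (j - 2) (dlt (u @ [(shift_past b a, Cap)]) :: word \<Rightarrow> 'k)"
      using snoc.IH u swap(1) by (meson typed_append)
    then have "normalizable k n (dlt ([] @ (u @ [(shift_past b a, Cap)]) @ [(shift_past a b, Cup)])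
        :: word \<Rightarrow> 'k)"
      using swap(2) by (intro normalizable_whisker) auto
    ultimately show ?thesis using x by (simp add: normalizable_tl_eq)
  qed
qed

lemma normalizable_word: "typed m n w \<Longrightarrow> normalizable m n (dlt w :: word \<Rightarrow> 'k::field)"
proof (induction w arbitrary: n rule: rev_induct)
  case Nil
  then show ?case using normalizable_cap_cup[of "[]" "[]"] by simp
next
  case (snoc x w)
  then obtain j where w: "typed m j w" and x: "typed j n [x]"
    by (auto simp: typed_snoc)
  from snoc.IH[OF w, unfolded normalizable_def] show ?case
  proof (elim disjE exE conjE)
    assume "tl_eq m j (dlt w) (\<lambda>_. 0 :: 'k)"
    then show ?thesis using tl_eq_append_dlt_zero x by (blast intro: normalizable_zero)
  next
    fix v k u
    assume vu: "cap_word v" "cup_word u" "typed m k v" "typed k j u"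
      and eq: "tl_eq m j (dlt w :: word \<Rightarrow> 'k) (dlt (v @ u))"
    have "tl_eq m n (dlt (w @ [x]) :: word \<Rightarrow> 'k) (dlt (v @ (u @ [x]) @ []))"
      using tl_eq_append_dlt[OF eq x] by simp
    moreover have "normalizable m n (dlt (v @ (u @ [x]) @ []) :: word \<Rightarrow> 'k)"
    proof (cases "snd x")
      case Cup
      then show ?thesis using vu x by (simp add: normalizable_cap_cup typed_append)
    next
      case Cap
      then have "normalizable k n (dlt (u @ [x]) :: word \<Rightarrow> 'k)"
        using normalizable_cup_word_Cap[of u k n "fst x"] vu x by (cases x) (simp add: typed_append)
      then show ?thesis using vu by (intro normalizable_whisker) auto
    qed
    ultimately show ?thesis by (rule normalizable_tl_eq)
  qed
qed

section \<open>Reading off the diagram of a word\<close>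

text \<open>A word is read layer by layer from the \<open>m\<close> input points. The state records the caps
  formed so far, as pairs of input points, and the current points from left to right: the two ends
  of a cup, or the input point a through-strand comes from. A cap closing the two ends of one cup
  removes a loop; a cap on any other pair of points except two through-strands is a zigzag, and
  the reading fails.\<close>

datatype point = CupL | CupR | Src nat

type_synonym state = "(nat \<times> nat) set \<times> point list"

definition ins_cup :: "nat \<Rightarrow> point list \<Rightarrow> point list" where
  "ins_cup a U = take a U @ [CupL, CupR] @ drop a U"

definition del_pair :: "nat \<Rightarrow> 'a list \<Rightarrow> 'a list" where
  "del_pair a U = take a U @ drop (Suc (Suc a)) U"

fun close_cap :: "point \<Rightarrow> point \<Rightarrow> (nat \<times> nat) set \<Rightarrow> (nat \<times> nat) set option" where
  "close_cap CupL CupR P = Some P"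
| "close_cap (Src i) (Src j) P = Some (insert (i, j) P)"
| "close_cap _ _ P = None"

fun read_layer :: "layer \<Rightarrow> state \<Rightarrow> state option" where
  "read_layer (a, Cup) (P, U) = (if a \<le> length U then Some (P, ins_cup a U) else None)"
| "read_layer (a, Cap) (P, U) = (if Suc a < length U
     then map_option (\<lambda>P'. (P', del_pair a U)) (close_cap (U ! a) (U ! Suc a) P) else None)"

fun read_word :: "state \<Rightarrow> word \<Rightarrow> state option" where
  "read_word s [] = Some s"
| "read_word s (x # w) = (case read_layer x s of None \<Rightarrow> None | Some s' \<Rightarrow> read_word s' w)"

definition diagram :: "nat \<Rightarrow> word \<Rightarrow> state option" where
  "diagram m w = read_word ({}, map Src [0..<m]) w"

lemma read_word_append: "read_word s (x @ y) = Option.bind (read_word s x) (\<lambda>s'. read_word s' y)"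
  by (induction s x rule: read_word.induct) (auto split: option.splits)

lemma length_ins_cup[simp]: "length (ins_cup a U) = length U + 2"
  by (simp add: ins_cup_def)

lemma length_del_pair[simp]: "Suc a < length U \<Longrightarrow> length (del_pair a U) = length U - 2"
  by (simp add: del_pair_def)

lemma nth_ins_cup: "a \<le> length U \<Longrightarrow> i < length U + 2 \<Longrightarrow>
  ins_cup a U ! i = (if i < a then U ! i else if i = a then CupL else if i = Suc a then CupR else U ! (i - 2))"
  by (auto simp: ins_cup_def nth_append min_def)

lemma nth_del_pair: "Suc a < length U \<Longrightarrow> i < length U - 2 \<Longrightarrow>
  del_pair a U ! i = (if i < a then U ! i else U ! (i + 2))"
  by (auto simp: del_pair_def nth_append min_def)

lemma close_cap_commute:
  "Option.bind (close_cap x y P) (close_cap z w) = Option.bind (close_cap z w P) (close_cap x y)"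
  by (cases x; cases y; cases z; cases w) (auto simp: insert_commute)

lemma ins_cup_append: "length X = a \<Longrightarrow> ins_cup a (X @ Y) = X @ CupL # CupR # Y"
  by (simp add: ins_cup_def)

lemma del_pair_append: "length X = a \<Longrightarrow> del_pair a (X @ x # y # Y) = X @ Y"
  by (simp add: del_pair_def)

lemma split_list_at:
  assumes "n \<le> length U"
  obtains X Y where "U = X @ Y" "length X = n"
  using assms by (metis append_take_drop_id length_take min_absorb2)

lemma list_two_elems:
  assumes "2 \<le> length U"
  obtains x y Z where "U = x # y # Z"
  using assms by (cases U; cases "tl U") auto

lemma ins_cup_ins_cup:
  assumes "a + 2 \<le> c" "c \<le> length U + 2"
  shows "ins_cup c (ins_cup a U) = ins_cup a (ins_cup (c - 2) U)"
proof -
  obtain X Y where U: "U = X @ Y" "length X = a" by (rule split_list_at[of a U]) (use assms in auto)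
  obtain Y1 Y2 where Y: "Y = Y1 @ Y2" "length Y1 = c - 2 - a" by (rule split_list_at[of "c - 2 - a" Y]) (use assms U in auto)
  have "ins_cup a U = (X @ CupL # CupR # Y1) @ Y2" using U Y ins_cup_append by simp
  then have l: "ins_cup c (ins_cup a U) = (X @ CupL # CupR # Y1) @ CupL # CupR # Y2"
    using ins_cup_append[of "X @ CupL # CupR # Y1" c Y2] U Y assms by simp
  have "ins_cup (c - 2) U = (X @ Y1) @ CupL # CupR # Y2" using U Y assms ins_cup_append[of "X @ Y1" "c - 2" Y2] by simp
  then have r: "ins_cup a (ins_cup (c - 2) U) = X @ CupL # CupR # Y1 @ CupL # CupR # Y2"
    using ins_cup_append[of X a] U by simp
  show ?thesis using l r by simp
qed

lemma del_pair_ins_cup: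
  assumes "a + 2 \<le> c" "Suc c < length U + 2"
  shows "del_pair c (ins_cup a U) = ins_cup a (del_pair (c - 2) U)"
proof -
  obtain X Y where U: "U = X @ Y" "length X = a" by (rule split_list_at[of a U]) (use assms in auto)
  obtain Y1 Y2 where Y: "Y = Y1 @ Y2" "length Y1 = c - 2 - a" by (rule split_list_at[of "c - 2 - a" Y]) (use assms U in auto)
  obtain x y Z where Z: "Y2 = x # y # Z" by (rule list_two_elems[of Y2]) (use assms U Y in auto)
  have "ins_cup a U = (X @ CupL # CupR # Y1) @ x # y # Z" using U Y Z ins_cup_append by simp
  then have l: "del_pair c (ins_cup a U) = (X @ CupL # CupR # Y1) @ Z"
    using del_pair_append[of "X @ CupL # CupR # Y1" c] U Y assms by simp
  have "del_pair (c - 2) U = (X @ Y1) @ Z" using U Y Z assms del_pair_append[of "X @ Y1" "c - 2"] by simp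
  then have r: "ins_cup a (del_pair (c - 2) U) = X @ CupL # CupR # Y1 @ Z"
    using ins_cup_append[of X a] U by simp
  show ?thesis using l r by simp
qed

lemma del_pair_ins_cup':
  assumes "a \<le> c" "c + 2 \<le> length U"
  shows "del_pair a (ins_cup (c + 2) U) = ins_cup c (del_pair a U)"
proof -
  obtain X Y where U: "U = X @ Y" "length X = a" by (rule split_list_at[of a U]) (use assms in auto)
  obtain x y Z where Z: "Y = x # y # Z" by (rule list_two_elems[of Y]) (use assms U in auto)
  obtain Y1 Y2 where Y: "Z = Y1 @ Y2" "length Y1 = c - a" by (rule split_list_at[of "c - a" Z]) (use assms U Z in auto)
  have "ins_cup (c + 2) U = (X @ x # y # Y1) @ CupL # CupR # Y2" using U Y Z assms ins_cup_append[of "X @ x # y # Y1" "c + 2"] by simp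
  then have l: "del_pair a (ins_cup (c + 2) U) = X @ Y1 @ CupL # CupR # Y2"
    using del_pair_append[of X a] U by simp
  have "del_pair a U = (X @ Y1) @ Y2" using U Y Z del_pair_append[of X a] by simp
  then have r: "ins_cup c (del_pair a U) = (X @ Y1) @ CupL # CupR # Y2"
    using ins_cup_append[of "X @ Y1" c] U Y assms by simp
  show ?thesis using l r by simp
qed

lemma del_pair_del_pair:
  assumes "a \<le> c" "c + 3 < length U"
  shows "del_pair c (del_pair a U) = del_pair a (del_pair (c + 2) U)"
proof -
  obtain X Y where U: "U = X @ Y" "length X = a" by (rule split_list_at[of a U]) (use assms in auto)
  obtain x y Z where Z: "Y = x # y # Z" by (rule list_two_elems[of Y]) (use assms U in auto)
  obtain Y1 Y2 where Y: "Z = Y1 @ Y2" "length Y1 = c - a" by (rule split_list_at[of "c - a" Z]) (use assms U Z in auto)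
  obtain z w V where V: "Y2 = z # w # V" by (rule list_two_elems[of Y2]) (use assms U Z Y in auto)
  have "del_pair a U = (X @ Y1) @ z # w # V" using U Y Z V del_pair_append[of X a] by simp
  then have l: "del_pair c (del_pair a U) = (X @ Y1) @ V"
    using del_pair_append[of "X @ Y1" c] U Y assms by simp
  have "del_pair (c + 2) U = (X @ x # y # Y1) @ V" using U Y Z V assms del_pair_append[of "X @ x # y # Y1" "c + 2"] by simp
  then have r: "del_pair a (del_pair (c + 2) U) = X @ Y1 @ V"
    using del_pair_append[of X a] U by simp
  show ?thesis using l r by simp
qed

lemma read_word_swap_Cup_Cup:
  assumes "a + 2 \<le> c"
  shows "read_word (P, U) [(a, Cup), (c, Cup)] = read_word (P, U) [(c - 2, Cup), (a, Cup)]"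
proof (cases "c \<le> length U + 2")
  case True
  have l: "read_word (P, U) [(a, Cup), (c, Cup)] = Some (P, ins_cup c (ins_cup a U))" using True assms by simp
  have r: "read_word (P, U) [(c - 2, Cup), (a, Cup)] = Some (P, ins_cup a (ins_cup (c - 2) U))" using True assms by simp
  show ?thesis unfolding l r ins_cup_ins_cup[OF assms True] ..
next
  case False
  have l: "read_word (P, U) [(a, Cup), (c, Cup)] = None" using False assms by simp
  have "\<not> c - 2 \<le> length U" using False by linarith
  then have r: "read_word (P, U) [(c - 2, Cup), (a, Cup)] = None" by simp
  show ?thesis unfolding l r ..
qed

lemma read_word_swap_Cup_Cap:
  assumes "a + 2 \<le> c"
  shows "read_word (P, U) [(a, Cup), (c, Cap)] = read_word (P, U) [(c - 2, Cap), (a, Cup)]"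
proof (cases "Suc c < length U + 2")
  case True
  have a: "a \<le> length U" using True assms by simp
  have cc: "Suc (c - 2) = c - Suc 0" using assms by simp
  have n1: "ins_cup a U ! c = U ! (c - 2)" "ins_cup a U ! Suc c = U ! Suc (c - 2)"
    using True assms a unfolding cc by (auto simp: nth_ins_cup)
  have l: "del_pair c (ins_cup a U) = ins_cup a (del_pair (c - 2) U)" by (rule del_pair_ins_cup[OF assms True])
  have c2: "Suc (c - 2) < length U" using True assms by simp
  have a2: "a \<le> length (del_pair (c - 2) U)" using c2 True assms by simp
  show ?thesis
    using a c2 a2 True
    by (cases "close_cap (U ! (c - 2)) (U ! Suc (c - 2)) P") (auto simp: n1 l)
next
  case False
  then have "\<not> Suc (c - 2) < length U" using assms by simp
  then show ?thesis using False assms by simp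
qed

lemma read_word_swap_Cap_Cup:
  assumes "a \<le> c"
  shows "read_word (P, U) [(a, Cap), (c, Cup)] = read_word (P, U) [(c + 2, Cup), (a, Cap)]"
proof (cases "c + 2 \<le> length U")
  case True
  have n1: "ins_cup (Suc (Suc c)) U ! a = U ! a" "ins_cup (Suc (Suc c)) U ! Suc a = U ! Suc a"
    using True assms by (auto simp: nth_ins_cup)
  have l: "del_pair a (ins_cup (Suc (Suc c)) U) = ins_cup c (del_pair a U)" using True assms del_pair_ins_cup' by simp
  have a1: "Suc a < length U" using True assms by simp
  have c1: "c \<le> length (del_pair a U)" using a1 True assms by simp
  show ?thesis
    using a1 c1 True
    by (cases "close_cap (U ! a) (U ! Suc a) P") (auto simp: n1 l)
next
  case False
  then show ?thesis using assms
    by (cases "close_cap (U ! a) (U ! Suc a) P") auto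
qed

lemma read_word_swap_Cap_Cap:
  assumes "a \<le> c"
  shows "read_word (P, U) [(a, Cap), (c, Cap)] = read_word (P, U) [(c + 2, Cap), (a, Cap)]"
proof (cases "c + 3 < length U")
  case True
  have n1: "del_pair a U ! c = U ! Suc (Suc c)" "del_pair a U ! Suc c = U ! Suc (Suc (Suc c))"
    using True assms by (auto simp: nth_del_pair numeral_3_eq_3)
  have n2: "del_pair (Suc (Suc c)) U ! a = U ! a" "del_pair (Suc (Suc c)) U ! Suc a = U ! Suc a"
    using True assms by (auto simp: nth_del_pair)
  have l0: "del_pair c (del_pair a U) = del_pair a (del_pair (c + 2) U)" by (rule del_pair_del_pair[OF assms True])
  have l: "del_pair c (del_pair a U) = del_pair a (del_pair (Suc (Suc c)) U)" using l0 by (simp only: add_2_eq_Suc')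
  have a1: "Suc a < length U" "Suc c < length (del_pair a U)" "Suc (Suc (Suc c)) < length U" "Suc a < length (del_pair (Suc (Suc c)) U)"
    using True assms by (auto simp: numeral_3_eq_3)
  have cc: "Option.bind (close_cap (U ! a) (U ! Suc a) P) (close_cap (U ! Suc (Suc c)) (U ! Suc (Suc (Suc c))))
    = Option.bind (close_cap (U ! Suc (Suc c)) (U ! Suc (Suc (Suc c))) P) (close_cap (U ! a) (U ! Suc a))" by (rule close_cap_commute)
  have L: "read_word (P, U) [(a, Cap), (c, Cap)] = map_option (\<lambda>P'. (P', del_pair c (del_pair a U)))
     (Option.bind (close_cap (U ! a) (U ! Suc a) P) (close_cap (U ! Suc (Suc c)) (U ! Suc (Suc (Suc c)))))"
    using a1 by (cases "close_cap (U ! a) (U ! Suc a) P") (auto simp: n1 split: option.splits)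
  have R: "read_word (P, U) [(c + 2, Cap), (a, Cap)] = map_option (\<lambda>P'. (P', del_pair a (del_pair (Suc (Suc c)) U)))
     (Option.bind (close_cap (U ! Suc (Suc c)) (U ! Suc (Suc (Suc c))) P) (close_cap (U ! a) (U ! Suc a)))"
    using a1 by (cases "close_cap (U ! Suc (Suc c)) (U ! Suc (Suc (Suc c))) P") (auto simp: n2 split: option.splits)
  show ?thesis by (simp only: L R cc l)
next
  case False
  have R: "read_word (P, U) [(c + 2, Cap), (a, Cap)] = None" using False by simp
  have L: "read_word (P, U) [(a, Cap), (c, Cap)] = None"
  proof (cases "Suc a < length U")
    case True
    have "\<not> Suc c < length (del_pair a U)" using True False by simp
    then have e: "\<And>P'. read_word (P', del_pair a U) [(c, Cap)] = None" by simp
    show ?thesis using True e by (cases "close_cap (U ! a) (U ! Suc a) P") simp_all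
  qed simp
  show ?thesis by (simp only: L R)
qed

lemma read_word_interchange:
  assumes "a + outs g \<le> c"
  shows "read_word s [(a, g), (c, h)] = read_word s [(c + ins g - outs g, h), (a, g)]"
proof -
  obtain P U where s: "s = (P, U)" by (cases s)
  show ?thesis
    using assms read_word_swap_Cup_Cup[of a c P U] read_word_swap_Cup_Cap[of a c P U]
      read_word_swap_Cap_Cup[of a c P U] read_word_swap_Cap_Cap[of a c P U]
    unfolding s by (cases g; cases h) (simp_all only: ins.simps outs.simps, simp_all)
qed

lemma read_word_length:
  "typed k k' w \<Longrightarrow> length U = k \<Longrightarrow> read_word (P, U) w = Some (P', U') \<Longrightarrow> length U' = k'"
proof (induction w arbitrary: k P U)
  case (Cons x w)
  obtain a g where x: "x = (a, g)" by (cases x)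
  show ?case
  proof (cases g)
    case Cup
    then have "read_word (P, ins_cup a U) w = Some (P', U')" "a \<le> length U"
      using Cons.prems x by (auto split: if_splits)
    then show ?thesis using Cons.IH[of "k + 2" "ins_cup a U" P] Cons.prems x Cup by auto
  next
    case Cap
    then obtain P1 where "read_word (P1, del_pair a U) w = Some (P', U')" "Suc a < length U"
      using Cons.prems x by (auto split: if_splits option.splits)
    then show ?thesis using Cons.IH[of "k - 2" "del_pair a U" P1] Cons.prems x Cap by auto
  qed
qed simp

lemma del_pair_ins_cup_same: "a \<le> length U \<Longrightarrow> del_pair a (ins_cup a U) = U"
  using ins_cup_append[of "take a U" a "drop a U"] del_pair_append[of "take a U" a CupL CupR "drop a U"]
  by simp

lemma read_word_loop:
  "a \<le> length U \<Longrightarrow> read_word (P, U) [(a, Cup), (a, Cap)] = Some (P, U)"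
  by (simp add: nth_ins_cup del_pair_ins_cup_same)

lemma read_word_zigzag:
  assumes "b = Suc a \<or> a = Suc b"
  shows "read_word s [(b, Cup), (a, Cap)] = None"
proof -
  have "close_cap x CupL P = None" for x P by (cases x) auto
  then show ?thesis using assms by (cases s) (auto simp: nth_ins_cup)
qed

lemma diagram_loop:
  assumes "typed m n (w1 @ [(a, Cup), (a, Cap)] @ w2)"
  shows "diagram m (w1 @ [(a, Cup), (a, Cap)] @ w2) = diagram m (w1 @ w2)"
proof (cases "diagram m w1")
  case (Some s)
  obtain k where "typed m k w1" "typed k n ([(a, Cup), (a, Cap)] @ w2)"
    using assms by (rule typed_appendE)
  moreover obtain P U where s: "s = (P, U)" by (cases s)
  ultimately have "a \<le> length U"
    using read_word_length[of m k w1 "map Src [0..<m]"] Some by (auto simp: diagram_def)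
  then have "read_word (P, U) ([(a, Cup), (a, Cap)] @ w2) = read_word (P, U) w2"
    unfolding read_word_append using read_word_loop by simp
  then show ?thesis using Some s unfolding diagram_def read_word_append by simp
qed (simp add: diagram_def read_word_append)

lemma diagram_zigzag:
  "b = Suc a \<or> a = Suc b \<Longrightarrow> diagram m (w1 @ [(b, Cup), (a, Cap)] @ w2) = None"
  unfolding diagram_def read_word_append using read_word_zigzag
  by (cases "read_word ({}, map Src [0..<m]) w1") auto

lemma diagram_interchange:
  assumes "a + outs g \<le> c"
  shows "diagram m (w1 @ [(a, g), (c, h)] @ w2) = diagram m (w1 @ [(c + ins g - outs g, h), (a, g)] @ w2)"
  unfolding diagram_def read_word_append read_word_interchange[OF assms] ..

lemma rel_vecs_cases:
  assumes "r \<in> rel_vecs m n"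
  obtains x y where "r = (\<lambda>w. dlt x w - dlt y w)" "diagram m x = diagram m y"
  | x where "r = dlt x" "diagram m x = None"
  using assms unfolding rel_vecs_def
proof (elim UnE CollectE exE conjE)
  fix w1 w2 a g c h
  assume "r = (\<lambda>w. dlt (w1 @ [(a, g), (c, h)] @ w2) w - dlt (w1 @ [(c + ins g - outs g, h), (a, g)] @ w2) w)"
    "a + outs g \<le> c"
  then show thesis using that(1) diagram_interchange by blast
next
  fix w1 w2 a
  assume "r = (\<lambda>w. dlt (w1 @ [(a, Cup), (a, Cap)] @ w2) w - dlt (w1 @ w2) w)"
    "typed m n (w1 @ [(a, Cup), (a, Cap)] @ w2)"
  then show thesis using that(1) diagram_loop by blast
next
  fix w1 w2 a
  assume "r = dlt (w1 @ [(a, Cup), (Suc a, Cap)] @ w2)"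
  then show thesis using that(2) diagram_zigzag by blast
next
  fix w1 w2 a
  assume "r = dlt (w1 @ [(Suc a, Cup), (a, Cap)] @ w2)"
  then show thesis using that(2) diagram_zigzag by blast
qed

definition diagram_coeff :: "nat \<Rightarrow> state \<Rightarrow> (word \<Rightarrow> 'k::field) \<Rightarrow> 'k" where
  "diagram_coeff m D f = (\<Sum>w\<in>{w. f w \<noteq> 0 \<and> diagram m w = Some D}. f w)"

lemma diagram_coeff_eq_sum:
  assumes "finite S" "{w. f w \<noteq> 0} \<subseteq> S"
  shows "diagram_coeff m D f = (\<Sum>w\<in>{w\<in>S. diagram m w = Some D}. f w)"
  unfolding diagram_coeff_def by (rule sum.mono_neutral_left) (use assms in auto)

lemma diagram_coeff_add:
  assumes "finite {w. f w \<noteq> 0}" "finite {w. g w \<noteq> 0}"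
  shows "diagram_coeff m D (\<lambda>w. f w + a * g w) = diagram_coeff m D f + a * (diagram_coeff m D g :: 'k::field)"
proof -
  let ?S = "{w. f w \<noteq> 0} \<union> {w. g w \<noteq> 0}"
  have S: "finite ?S" using assms by simp
  have "diagram_coeff m D (\<lambda>w. f w + a * g w) = (\<Sum>w\<in>{w\<in>?S. diagram m w = Some D}. f w + a * g w)"
    by (rule diagram_coeff_eq_sum[OF S]) auto
  also have "\<dots> = (\<Sum>w\<in>{w\<in>?S. diagram m w = Some D}. f w) + a * (\<Sum>w\<in>{w\<in>?S. diagram m w = Some D}. g w)"
    by (simp add: sum.distrib sum_distrib_left)
  also have "\<dots> = diagram_coeff m D f + a * diagram_coeff m D g"
    using diagram_coeff_eq_sum[OF S, of f] diagram_coeff_eq_sum[OF S, of g] by auto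
  finally show ?thesis .
qed

lemma diagram_coeff_sum:
  "finite A \<Longrightarrow> (\<And>i. i \<in> A \<Longrightarrow> finite {w. g i w \<noteq> 0}) \<Longrightarrow>
    diagram_coeff m D (\<lambda>w. \<Sum>i\<in>A. c i * g i w) = (\<Sum>i\<in>A. c i * diagram_coeff m D (g i :: word \<Rightarrow> 'k::field))"
proof (induction A rule: finite_induct)
  case empty
  then show ?case by (simp add: diagram_coeff_def)
next
  case (insert x F)
  then have "diagram_coeff m D (\<lambda>w. (\<Sum>i\<in>F. c i * g i w) + c x * g x w) =
      diagram_coeff m D (\<lambda>w. \<Sum>i\<in>F. c i * g i w) + c x * diagram_coeff m D (g x)"
    by (intro diagram_coeff_add finite_support_sum) auto
  then show ?case using insert by (simp add: add.commute)
qed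

lemma diagram_coeff_dlt: "diagram_coeff m D (dlt x :: word \<Rightarrow> 'k::field) = (if diagram m x = Some D then 1 else 0)"
proof -
  have "diagram_coeff m D (dlt x :: word \<Rightarrow> 'k) = (\<Sum>w\<in>{w\<in>{x}. diagram m w = Some D}. dlt x w)"
    by (rule diagram_coeff_eq_sum) (auto simp: dlt_def)
  moreover have "{w\<in>{x}. diagram m w = Some D} = (if diagram m x = Some D then {x} else {})"
    by auto
  ultimately show ?thesis by (simp add: dlt_def)
qed

lemma rel_vecs_finite_support: "r \<in> rel_vecs m n \<Longrightarrow> finite {w. r w \<noteq> (0::'k::field)}"
  by (erule rel_vecs_cases) (use finite_support_add[OF finite_support_dlt finite_support_dlt, of _ "-1"]
      finite_support_dlt in auto)

lemma diagram_coeff_rel_vecs: "r \<in> rel_vecs m n \<Longrightarrow> diagram_coeff m D r = (0::'k::field)"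
proof (erule rel_vecs_cases)
  fix x y
  assume "r = (\<lambda>w. dlt x w - dlt y w)" "diagram m x = diagram m y"
  then show ?thesis
    using diagram_coeff_add[OF finite_support_dlt finite_support_dlt, of m D x "-1" y]
    by (simp add: diagram_coeff_dlt)
qed (simp add: diagram_coeff_dlt)

lemma diagram_coeff_tl_ideal:
  assumes "f \<in> tl_ideal m n"
  shows "diagram_coeff m D f = (0::'k::field)"
  using assms unfolding tl_ideal_def
proof (induction rule: lin_span_induct)
  case zero
  then show ?case by (simp add: diagram_coeff_def)
next
  case (add f r a)
  then show ?case
    by (simp add: diagram_coeff_add diagram_coeff_rel_vecs rel_vecs_finite_support
        finite_support_lin_span[OF rel_vecs_finite_support])
qed

section \<open>Cap words and cup words are determined by their diagrams\<close>

fun is_src :: "point \<Rightarrow> bool" where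
  "is_src (Src i) = True"
| "is_src CupL = False"
| "is_src CupR = False"

fun ins_cups :: "point list \<Rightarrow> word \<Rightarrow> point list" where
  "ins_cups U [] = U"
| "ins_cups U (x # w) = ins_cups (ins_cup (fst x) U) w"

definition through_count :: "state \<Rightarrow> nat" where
  "through_count D = length (filter is_src (snd D))"

lemma ins_cups_snoc: "ins_cups U (w @ [(a, g)]) = ins_cup a (ins_cups U w)"
  by (induction U w rule: ins_cups.induct) auto

lemma length_ins_cups: "length (ins_cups U w) = length U + 2 * length w"
  by (induction U w rule: ins_cups.induct) auto

lemma filter_ins_cups: "filter is_src (ins_cups U w) = filter is_src U"
proof (induction U w rule: ins_cups.induct)
  case (2 U x w)
  have "filter is_src (ins_cup a U) = filter is_src (take a U @ drop a U)" for a U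
    by (simp only: ins_cup_def filter_append) simp
  then show ?case using 2 by simp
qed simp

lemma set_del_pair: "set (del_pair a U) \<subseteq> set U"
  unfolding del_pair_def by (auto dest: in_set_takeD in_set_dropD)

lemma read_cup_word:
  "cup_word u \<Longrightarrow> typed (length U) n u \<Longrightarrow> read_word (P, U) u = Some (P, ins_cups U u)"
proof (induction u arbitrary: U)
  case (Cons x u)
  then obtain a where "x = (a, Cup)" by (cases x) auto
  with Cons show ?case by simp
qed simp

lemma read_cap_word:
  "cap_word v \<Longrightarrow> list_all is_src U \<Longrightarrow> typed (length U) k v \<Longrightarrow>
    \<exists>P' U'. read_word (P, U) v = Some (P', U') \<and> list_all is_src U' \<and> length U' = k"
proof (induction v arbitrary: P U)
  case (Cons x v)
  then obtain a where x: "x = (a, Cap)" and a: "Suc a < length U" by (cases x) auto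
  have "is_src (U ! a)" "is_src (U ! Suc a)"
    using Cons.prems(2) a by (auto simp: list_all_length)
  then obtain i j where ij: "U ! a = Src i" "U ! Suc a = Src j"
    by (cases "U ! a"; cases "U ! Suc a") auto
  have "list_all is_src (del_pair a U)"
    using Cons.prems(2) set_del_pair[of a U] by (auto simp: list_all_iff)
  then show ?case using Cons a ij x by simp
qed simp

lemma diagram_cap_cup:
  assumes "cap_word v" "cup_word u" "typed m k v" "typed k n u"
  obtains P U where "read_word ({}, map Src [0..<m]) v = Some (P, U)" "list_all is_src U" "length U = k"
    "diagram m (v @ u) = Some (P, ins_cups U u)"
proof -
  have "list_all is_src (map Src [0..<m])" "typed (length (map Src [0..<m])) k v"
    using assms(3) by (simp_all add: list_all_iff)
  then obtain P U where PU: "read_word ({}, map Src [0..<m]) v = Some (P, U)" "list_all is_src U" "length U = k"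
    using read_cap_word[OF assms(1)] by blast
  moreover have "read_word (P, U) u = Some (P, ins_cups U u)"
    using read_cup_word[OF assms(2)] assms(4) PU(3) by simp
  ultimately show ?thesis using that unfolding diagram_def read_word_append by simp
qed

lemma through_count_cap_cup:
  assumes "cap_word v" "cup_word u" "typed m k v" "typed k n u"
  obtains D where "diagram m (v @ u) = Some D" "through_count D = k"
proof -
  obtain P U where "list_all is_src U" "length U = k" "diagram m (v @ u) = Some (P, ins_cups U u)"
    using diagram_cap_cup[OF assms] by blast
  then show ?thesis
    using that[of "(P, ins_cups U u)"] by (simp add: through_count_def filter_ins_cups list_all_iff)
qed

lemma nth_del_pair_shift_past:
  assumes "disjoint_pairs b p" "Suc b < length U" "Suc p < length U"
  shows "del_pair b U ! shift_past b p = U ! p" "del_pair b U ! Suc (shift_past b p) = U ! Suc p"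
    "Suc (shift_past b p) < length (del_pair b U)"
proof -
  have "shift_past b p = p - 2 \<and> Suc (Suc (p - 2)) = p \<and> b < p \<or> shift_past b p = p \<and> p < b"
    using assms(1) by (auto simp: shift_past_def)
  then show "del_pair b U ! shift_past b p = U ! p" "del_pair b U ! Suc (shift_past b p) = U ! Suc p"
    "Suc (shift_past b p) < length (del_pair b U)"
    using assms by (auto simp: nth_del_pair)
qed

lemma del_pair_shift_past_commute:
  assumes "disjoint_pairs b p" "Suc b < length U" "Suc p < length U"
  shows "del_pair (shift_past p b) (del_pair p U) = del_pair (shift_past b p) (del_pair b U)"
proof (cases "b < p")
  case True
  then have "Suc (Suc (p - 2)) = p" using assms(1) by simp
  then show ?thesis using del_pair_del_pair[of b "p - 2" U] assms True by (simp add: shift_past_def)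
next
  case False
  then have "Suc (Suc (b - 2)) = b" using assms(1) by simp
  then show ?thesis using del_pair_del_pair[of p "b - 2" U] assms False by (simp add: shift_past_def)
qed

lemma nth_ins_cup_shift_past:
  assumes "disjoint_pairs a c" "c \<le> length Y" "Suc a < length Y + 2"
  shows "ins_cup c Y ! a = Y ! shift_past c a" "ins_cup c Y ! Suc a = Y ! Suc (shift_past c a)"
    "Suc (shift_past c a) < length Y"
proof -
  have "shift_past c a = a - 2 \<and> Suc (Suc (a - 2)) = a \<and> a - Suc 0 = Suc (a - 2) \<and> c < a \<or> shift_past c a = a \<and> a < c"
    using assms(1) by (auto simp: shift_past_def)
  then show "ins_cup c Y ! a = Y ! shift_past c a" "ins_cup c Y ! Suc a = Y ! Suc (shift_past c a)"
    "Suc (shift_past c a) < length Y"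
    using assms by (auto simp: nth_ins_cup)
qed

lemma del_pair_ins_cup_shift_past:
  assumes "disjoint_pairs a c" "c \<le> length Y" "Suc a < length Y + 2"
  shows "del_pair a (ins_cup c Y) = ins_cup (shift_past a c) (del_pair (shift_past c a) Y)"
proof (cases "c < a")
  case True
  then show ?thesis using del_pair_ins_cup[of c a Y] assms by (simp add: shift_past_def)
next
  case False
  then have "Suc (Suc (c - 2)) = c" using assms(1) by simp
  then show ?thesis using del_pair_ins_cup'[of a "c - 2" Y] assms False by (simp add: shift_past_def)
qed

lemma tl_eq_Cup_past_Cup:
  assumes "disjoint_pairs a c" "c \<le> L" "Suc (shift_past c a) < L" "typed K (L - 2) u'"
    "tl_eq K L (dlt u :: word \<Rightarrow> 'k::field) (dlt (u' @ [(shift_past c a, Cup)]))"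
  shows "typed K L (u' @ [(shift_past a c, Cup)])"
    "tl_eq K (L + 2) (dlt (u @ [(c, Cup)]) :: word \<Rightarrow> 'k) (dlt ((u' @ [(shift_past a c, Cup)]) @ [(a, Cup)]))"
proof -
  have cups: "typed (L - 2) (L + 2) [(shift_past c a, Cup), (c, Cup)]"
    using assms(2,3) by auto
  note swap = tl_eq_swap_Cup_Cup[OF assms(1) cups]
  have L: "L - 2 + 2 = L" using assms(3) by simp
  show "typed K L (u' @ [(shift_past a c, Cup)])"
    using typed_append[OF assms(4) swap(1)] L by simp
  have "tl_eq K (L + 2) (dlt (u @ [(c, Cup)]) :: word \<Rightarrow> 'k) (dlt ((u' @ [(shift_past c a, Cup)]) @ [(c, Cup)]))"
    using tl_eq_append_dlt[OF assms(5)] assms(2) by simp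
  also have "tl_eq K (L + 2) \<dots> (dlt ((u' @ [(shift_past a c, Cup)]) @ [(a, Cup)]))"
    using tl_eq_prepend_dlt[OF assms(4) swap(3)] by simp
  finally show "tl_eq K (L + 2) (dlt (u @ [(c, Cup)]) :: word \<Rightarrow> 'k)
      (dlt ((u' @ [(shift_past a c, Cup)]) @ [(a, Cup)]))" .
qed

lemma cup_word_extract:
  assumes "cup_word u" "typed (length U) n u" "list_all is_src U" "Suc a < n"
    "ins_cups U u ! a = CupL" "ins_cups U u ! Suc a = CupR"
  shows "\<exists>u'. cup_word u' \<and> typed (length U) (n - 2) u' \<and>
    tl_eq (length U) n (dlt u :: word \<Rightarrow> 'k::field) (dlt (u' @ [(a, Cup)])) \<and>
    ins_cups U u' = del_pair a (ins_cups U u)"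
  using assms
proof (induction u arbitrary: n a rule: rev_induct)
  case Nil
  then show ?case by (auto simp: list_all_length)
next
  case (snoc x u)
  obtain c where x: "x = (c, Cup)" using snoc.prems(1) by (cases x) auto
  let ?Y = "ins_cups U u"
  have u: "cup_word u" "typed (length U) (n - 2) u" and c: "c \<le> n - 2" "2 \<le> n"
    using snoc.prems(1,2) x by (auto simp: typed_snoc)
  have Y: "length ?Y = n - 2"
    using cup_word_typed_length[OF u] length_ins_cups[of U u] by simp
  have X: "ins_cups U (u @ [x]) = ins_cup c ?Y" using x by (simp add: ins_cups_snoc)
  consider "c = a" | "c = Suc a \<or> Suc c = a" | "disjoint_pairs a c" by linarith
  then show ?case
  proof cases
    case 1
    then show ?thesis using u x X Y c by (intro exI[of _ u]) (auto simp: tl_eq_refl del_pair_ins_cup_same)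
  next
    case 2
    then show ?thesis using snoc.prems(4-6) X Y c by (auto simp: nth_ins_cup)
  next
    case 3
    have Y_pair: "Suc (shift_past c a) < n - 2" "?Y ! shift_past c a = CupL"
      "?Y ! Suc (shift_past c a) = CupR"
      using nth_ins_cup_shift_past[OF 3, of ?Y] snoc.prems(4-6) X Y c by auto
    obtain u' where u': "cup_word u'" "typed (length U) (n - 2 - 2) u'"
      "tl_eq (length U) (n - 2) (dlt u :: word \<Rightarrow> 'k) (dlt (u' @ [(shift_past c a, Cup)]))"
      "ins_cups U u' = del_pair (shift_past c a) ?Y"
      using snoc.IH[OF u snoc.prems(3) Y_pair] by blast
    note step = tl_eq_Cup_past_Cup[OF 3 c(1) Y_pair(1) u'(2,3)]
    have "Suc (Suc (n - 2)) = n" using c(2) by simp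
    then show ?thesis
      using u'(1,4) step x X Y c snoc.prems(4) del_pair_ins_cup_shift_past[OF 3, of ?Y]
      by (intro exI[of _ "u' @ [(shift_past a c, Cup)]"]) (auto simp: ins_cups_snoc)
  qed
qed

lemma tl_eq_cup_words:
  assumes "cup_word u" "cup_word u'" "typed (length U) n u" "typed (length U) n u'" "list_all is_src U"
    "ins_cups U u = ins_cups U u'"
  shows "tl_eq (length U) n (dlt u :: word \<Rightarrow> 'k::field) (dlt u')"
  using assms
proof (induction u arbitrary: n u' rule: rev_induct)
  case Nil
  then have "u' = []" using cup_word_typed_length[OF Nil.prems(2,4)] by simp
  then show ?case by (simp add: tl_eq_refl)
next
  case (snoc x u)
  obtain a where x: "x = (a, Cup)" using snoc.prems(1) by (cases x) auto
  let ?Y = "ins_cups U u"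
  have u: "cup_word u" "typed (length U) (n - 2) u" and a: "a \<le> n - 2" "2 \<le> n"
    using snoc.prems(1,3) x by (auto simp: typed_snoc)
  have Y: "length ?Y = n - 2"
    using cup_word_typed_length[OF u] length_ins_cups[of U u] by simp
  have X: "ins_cups U (u @ [x]) = ins_cup a ?Y" using x by (simp add: ins_cups_snoc)
  have u': "ins_cups U u' = ins_cup a ?Y" using snoc.prems(6) X by simp
  then have "ins_cups U u' ! a = CupL" "ins_cups U u' ! Suc a = CupR" "Suc a < n"
    using Y a by (auto simp: nth_ins_cup)
  then obtain u'' where u'': "cup_word u''" "typed (length U) (n - 2) u''"
    "tl_eq (length U) n (dlt u' :: word \<Rightarrow> 'k) (dlt (u'' @ [(a, Cup)]))"
    "ins_cups U u'' = del_pair a (ins_cups U u')"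
    using cup_word_extract[OF snoc.prems(2,4,5)] by blast
  have "ins_cups U u = ins_cups U u''"
    using u''(4) u' del_pair_ins_cup_same[of a ?Y] Y a by simp
  then have "tl_eq (length U) (n - 2) (dlt u :: word \<Rightarrow> 'k) (dlt u'')"
    using snoc.IH[OF u(1) u''(1) u(2) u''(2) snoc.prems(5)] by blast
  moreover have "typed (n - 2) n [(a, Cup)]" using a by auto
  ultimately have "tl_eq (length U) n (dlt (u @ [x]) :: word \<Rightarrow> 'k) (dlt (u'' @ [(a, Cup)]))"
    using tl_eq_append_dlt x by blast
  also have "tl_eq (length U) n \<dots> (dlt u')"
    using u''(3) by (rule tl_eq_sym)
  finally show ?case .
qed

definition cap_inv :: "state \<Rightarrow> bool" where
  "cap_inv s \<longleftrightarrow> list_all is_src (snd s) \<and> distinct (snd s) \<and>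
     (\<forall>(i, j)\<in>fst s. Src i \<notin> set (snd s) \<and> Src j \<notin> set (snd s))"

lemma cap_inv_input: "cap_inv ({}, map Src [0..<m])"
  unfolding cap_inv_def by (auto simp: list_all_iff distinct_map inj_on_def)

lemma cap_inv_Src:
  assumes "cap_inv (P, U)" "a < length U"
  shows "\<exists>i. U ! a = Src i"
proof -
  have "is_src (U ! a)" using assms unfolding cap_inv_def by (simp add: list_all_length)
  then show ?thesis by (cases "U ! a") auto
qed

lemma del_pair_decomp:
  assumes "Suc a < length U"
  obtains X Y where "U = X @ U ! a # U ! Suc a # Y" "del_pair a U = X @ Y"
proof -
  obtain X Z where U: "U = X @ Z" "length X = a" by (rule split_list_at[of a U]) (use assms in auto)
  obtain x y Y where Z: "Z = x # y # Y" by (rule list_two_elems[of Z]) (use assms U in auto)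
  show ?thesis by (rule that[of X Y]) (use U Z in \<open>auto simp: nth_append del_pair_append\<close>)
qed

lemma distinct_del_pair:
  assumes "distinct U" "Suc a < length U"
  shows "distinct (del_pair a U)" "U ! a \<notin> set (del_pair a U)" "U ! Suc a \<notin> set (del_pair a U)"
proof -
  obtain X Y where U: "U = X @ U ! a # U ! Suc a # Y" and del: "del_pair a U = X @ Y"
    using del_pair_decomp[OF assms(2)] by blast
  have "distinct (X @ U ! a # U ! Suc a # Y)" using assms(1) U by simp
  then show "distinct (del_pair a U)" "U ! a \<notin> set (del_pair a U)" "U ! Suc a \<notin> set (del_pair a U)"
    unfolding del by auto
qed

lemma cap_inv_step:
  assumes "cap_inv (P, U)" "Suc a < length U" "U ! a = Src i" "U ! Suc a = Src j"
  shows "cap_inv (insert (i, j) P, del_pair a U)"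
proof -
  have new: "distinct (del_pair a U)" "Src i \<notin> set (del_pair a U)" "Src j \<notin> set (del_pair a U)"
    using assms distinct_del_pair[of U a] unfolding cap_inv_def by auto
  have old: "\<forall>x\<in>set (del_pair a U). is_src x"
    "\<forall>(k, l)\<in>P. Src k \<notin> set (del_pair a U) \<and> Src l \<notin> set (del_pair a U)"
    using assms(1) set_del_pair[of a U] unfolding cap_inv_def list_all_iff by auto
  show ?thesis
    using new old unfolding cap_inv_def list_all_iff by simp
qed

lemma read_cap_word_new_caps:
  assumes "cap_word v" "read_word (P, U) v = Some (P', U')" "(i, j) \<in> P'" "(i, j) \<notin> P"
  shows "Src i \<in> set U \<and> Src j \<in> set U"
  using assms
proof (induction v arbitrary: P U)
  case (Cons x v)
  then obtain a where x: "x = (a, Cap)" and a: "Suc a < length U" by (cases x) (auto split: if_splits)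
  then obtain P1 where P1: "close_cap (U ! a) (U ! Suc a) P = Some P1"
    "read_word (P1, del_pair a U) v = Some (P', U')"
    using Cons.prems(2) by (auto split: option.splits)
  have in_U: "U ! a \<in> set U" "U ! Suc a \<in> set U" "set (del_pair a U) \<subseteq> set U"
    using a set_del_pair[of a U] by auto
  note IH = Cons.IH[OF _ P1(2) Cons.prems(3)]
  consider "P1 = P" | k l where "U ! a = Src k" "U ! Suc a = Src l" "P1 = insert (k, l) P"
    using P1(1) by (cases "U ! a"; cases "U ! Suc a") auto
  then show ?case
  proof cases
    case 1
    then show ?thesis using IH Cons.prems(1,4) x in_U by auto
  next
    case 2
    then show ?thesis using IH Cons.prems(1,4) x in_U by (cases "(i, j) = (k, l)") auto
  qed
qed simp

lemma read_cap_word_mono: "cap_word v \<Longrightarrow> read_word (P, U) v = Some (P', U') \<Longrightarrow> P \<subseteq> P'"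
proof (induction v arbitrary: P U)
  case (Cons x v)
  then obtain a where x: "x = (a, Cap)" and a: "Suc a < length U" by (cases x) (auto split: if_splits)
  then obtain P1 where P1: "close_cap (U ! a) (U ! Suc a) P = Some P1"
    "read_word (P1, del_pair a U) v = Some (P', U')"
    using Cons.prems(2) by (auto split: option.splits)
  have "P \<subseteq> P1" using P1(1) by (cases "U ! a"; cases "U ! Suc a") auto
  then show ?case using Cons.IH[OF _ P1(2)] Cons.prems(1) x by auto
qed simp

lemma tl_eq_Cap_past_Cap:
  assumes "disjoint_pairs p b" "Suc p < L" "Suc b < L" "typed (L - 2 - 2) k v'"
    "tl_eq (L - 2) k (dlt v :: word \<Rightarrow> 'k::field) (dlt ((shift_past b p, Cap) # v'))"
  shows "typed (L - 2) k ((shift_past p b, Cap) # v')"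
    "tl_eq L k (dlt ((b, Cap) # v) :: word \<Rightarrow> 'k) (dlt ((p, Cap) # (shift_past p b, Cap) # v'))"
proof -
  have caps: "typed L (L - 2 - 2) [(b, Cap), (shift_past b p, Cap)]"
    using assms(1-3) by (auto simp: shift_past_def)
  note swap = tl_eq_swap_Cap_Cap[OF assms(1) caps]
  show "typed (L - 2) k ((shift_past p b, Cap) # v')"
    using swap(2) assms(4) by simp
  have "tl_eq L k (dlt ([(b, Cap)] @ v) :: word \<Rightarrow> 'k) (dlt ([(b, Cap)] @ (shift_past b p, Cap) # v'))"
    using assms(3) by (intro tl_eq_prepend_dlt[OF _ assms(5)]) simp
  also have "tl_eq L k \<dots> (dlt ([(p, Cap), (shift_past p b, Cap)] @ v'))"
    using tl_eq_append_dlt[OF swap(3) assms(4)] by simp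
  finally show "tl_eq L k (dlt ((b, Cap) # v) :: word \<Rightarrow> 'k) (dlt ((p, Cap) # (shift_past p b, Cap) # v'))"
    by simp
qed

lemma read_word_Cap_shift_past:
  assumes "disjoint_pairs p b" "Suc p < length U" "Suc b < length U" "U ! b = Src x" "U ! Suc b = Src y"
    "read_word (insert (x, y) P, del_pair (shift_past b p) (del_pair b U)) v = Some R"
  shows "read_word (P, del_pair p U) ((shift_past p b, Cap) # v) = Some R"
  using nth_del_pair_shift_past[OF assms(1-3)] del_pair_shift_past_commute[OF assms(1-3)] assms(4-6)
  by simp

text \<open>A cap overlapping the pair \<open>p\<close> consumes one of its strands, so the cap joining the
  strands of \<open>p\<close> is never formed.\<close>

lemma read_cap_word_overlapping_cap:
  assumes "cap_inv (P0, U0)" "cap_word v" "Suc b < length U0" "Suc p < length U0"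
    "b = Suc p \<or> Suc b = p" "U0 ! p = Src i" "U0 ! Suc p = Src j"
    "read_word (P0, U0) ((b, Cap) # v) = Some (P, U1)"
  shows "(i, j) \<notin> P"
proof
  assume ij: "(i, j) \<in> P"
  obtain x y where xy: "U0 ! b = Src x" "U0 ! Suc b = Src y"
    using cap_inv_Src[OF assms(1), of b] cap_inv_Src[OF assms(1) assms(3)] assms(3) by fastforce
  have read_v: "read_word (insert (x, y) P0, del_pair b U0) v = Some (P, U1)"
    using assms(3,8) xy by simp
  have distinct: "distinct U0" using assms(1) by (simp add: cap_inv_def)
  have "Src i \<in> set U0" using assms(4,6) by (metis Suc_lessD nth_mem)
  then have "(i, j) \<notin> P0" using assms(1) unfolding cap_inv_def by auto
  moreover have "i \<noteq> j" using distinct assms(4,6,7) nth_eq_iff_index_eq[of U0 p "Suc p"] by auto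
  ultimately have "(i, j) \<notin> insert (x, y) P0" using assms(5-7) xy by auto
  then have "Src i \<in> set (del_pair b U0)" "Src j \<in> set (del_pair b U0)"
    using read_cap_word_new_caps[OF assms(2) read_v ij] by auto
  moreover have "U0 ! b \<notin> set (del_pair b U0)" "U0 ! Suc b \<notin> set (del_pair b U0)"
    using distinct_del_pair[OF distinct assms(3)] by auto
  ultimately show False using assms(5-7) by auto
qed

lemma cap_word_extract:
  assumes "cap_inv (P0, U0)" "cap_word v" "typed (length U0) k v" "Suc p < length U0"
    "U0 ! p = Src i" "U0 ! Suc p = Src j" "read_word (P0, U0) v = Some (P, U1)" "(i, j) \<in> P"
  shows "\<exists>v'. cap_word v' \<and> typed (length U0 - 2) k v' \<and>
     tl_eq (length U0) k (dlt v :: word \<Rightarrow> 'k::field) (dlt ((p, Cap) # v')) \<and>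
     read_word (insert (i, j) P0, del_pair p U0) v' = Some (P, U1)"
  using assms
proof (induction v arbitrary: P0 U0 p i j)
  case Nil
  then have "Src i \<in> set U0" by (metis Suc_lessD nth_mem)
  then show ?case using Nil.prems(1,7,8) unfolding cap_inv_def by auto
next
  case (Cons x v)
  obtain b where x: "x = (b, Cap)" using Cons.prems(2) by (cases x) auto
  let ?U = "del_pair b U0"
  have v: "cap_word v" "typed (length U0 - 2) k v" and b: "Suc b < length U0"
    using Cons.prems(2,3) x by auto
  obtain x' y' where xy: "U0 ! b = Src x'" "U0 ! Suc b = Src y'"
    using cap_inv_Src[OF Cons.prems(1), of b] cap_inv_Src[OF Cons.prems(1) b] b by fastforce
  have read_v: "read_word (insert (x', y') P0, ?U) v = Some (P, U1)"
    using Cons.prems(7) x b xy by simp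
  have inv: "cap_inv (insert (x', y') P0, ?U)" by (rule cap_inv_step[OF Cons.prems(1) b xy])
  consider "b = p" | "b = Suc p \<or> Suc b = p" | "disjoint_pairs p b" by linarith
  then show ?case
  proof cases
    case 1
    then show ?thesis using v read_v xy Cons.prems(5,6) x by (intro exI[of _ v]) (auto simp: tl_eq_refl)
  next
    case 2
    then show ?thesis
      using read_cap_word_overlapping_cap[OF Cons.prems(1) v(1) b Cons.prems(4) 2 Cons.prems(5,6)]
        Cons.prems(7,8) x by simp
  next
    case 3
    then have "disjoint_pairs b p" by linarith
    note nth = nth_del_pair_shift_past[OF this b Cons.prems(4)]
    have "typed (length ?U) k v" using v(2) b by simp
    then obtain v' where v': "cap_word v'" "typed (length U0 - 2 - 2) k v'"
      "tl_eq (length U0 - 2) k (dlt v :: word \<Rightarrow> 'k) (dlt ((shift_past b p, Cap) # v'))"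
      "read_word (insert (i, j) (insert (x', y') P0), del_pair (shift_past b p) ?U) v' = Some (P, U1)"
      using Cons.IH[OF inv v(1) _ nth(3) _ _ read_v Cons.prems(8)] nth(1,2) Cons.prems(5,6) b
      by auto
    note swap = tl_eq_Cap_past_Cap[OF 3 Cons.prems(4) b v'(2,3)]
    have "read_word (insert (i, j) P0, del_pair p U0) ((shift_past p b, Cap) # v') = Some (P, U1)"
      using read_word_Cap_shift_past[OF 3 Cons.prems(4) b xy] v'(4) by (simp add: insert_commute)
    then show ?thesis
      using v'(1) swap x by (intro exI[of _ "(shift_past p b, Cap) # v'"]) simp
  qed
qed

lemma tl_eq_cap_words:
  assumes "cap_inv (P0, U0)" "cap_word v" "cap_word v'" "typed (length U0) k v" "typed (length U0) k v'"
    "read_word (P0, U0) v = Some (P, U1)" "read_word (P0, U0) v' = Some (P, U1')"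
  shows "tl_eq (length U0) k (dlt v :: word \<Rightarrow> 'k::field) (dlt v')"
  using assms
proof (induction v arbitrary: P0 U0 v' U1')
  case Nil
  then have "v' = []" using cap_word_typed_length[OF Nil.prems(3,5)] by simp
  then show ?case by (simp add: tl_eq_refl)
next
  case (Cons x v)
  obtain p where x: "x = (p, Cap)" using Cons.prems(2) by (cases x) auto
  have v: "cap_word v" "typed (length U0 - 2) k v" and p: "Suc p < length U0"
    using Cons.prems(2,4) x by auto
  obtain i j where ij: "U0 ! p = Src i" "U0 ! Suc p = Src j"
    using cap_inv_Src[OF Cons.prems(1), of p] cap_inv_Src[OF Cons.prems(1) p] p by fastforce
  have read_v: "read_word (insert (i, j) P0, del_pair p U0) v = Some (P, U1)"
    using Cons.prems(6) x p ij by simp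
  have "(i, j) \<in> P" using read_cap_word_mono[OF v(1) read_v] by blast
  then obtain v'' where v'': "cap_word v''" "typed (length U0 - 2) k v''"
    "tl_eq (length U0) k (dlt v' :: word \<Rightarrow> 'k) (dlt ((p, Cap) # v''))"
    "read_word (insert (i, j) P0, del_pair p U0) v'' = Some (P, U1')"
    using cap_word_extract[OF Cons.prems(1,3,5) p ij Cons.prems(7)] by blast
  have "tl_eq (length U0 - 2) k (dlt v :: word \<Rightarrow> 'k) (dlt v'')"
    using Cons.IH[OF cap_inv_step[OF Cons.prems(1) p ij] v(1) v''(1) _ _ read_v v''(4)] v(2) v''(2) p
    by simp
  then have "tl_eq (length U0) k (dlt ([(p, Cap)] @ v) :: word \<Rightarrow> 'k) (dlt ([(p, Cap)] @ v''))"
    using p by (intro tl_eq_prepend_dlt) auto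
  also have "tl_eq (length U0) k \<dots> (dlt v')"
    using tl_eq_sym[OF v''(3)] by simp
  finally show ?case using x by simp
qed

section \<open>The Jones-Wenzl projector\<close>

lemma finite_adm_member: "I \<in> adm k \<Longrightarrow> finite I"
  unfolding adm_def by (auto intro: finite_subset)

lemma finite_adm: "finite (adm k)"
  by (rule finite_subset[of _ "Pow {1..k}"]) (auto simp: adm_def)

lemma empty_in_adm: "{} \<in> adm k"
  unfolding adm_def by simp

lemma adm_Max:
  assumes "I \<in> adm k" "I \<noteq> {}"
  shows "1 \<le> Max I" "Max I + 1 \<le> k" "I - {Max I} \<in> adm (k - 2)"
proof -
  have I: "finite I" "I \<subseteq> {1..k}" "k \<notin> I" "\<forall>i\<in>I. Suc i \<notin> I"
    using assms(1) finite_adm_member unfolding adm_def by auto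
  have M: "Max I \<in> I" using I(1) assms(2) by simp
  show "1 \<le> Max I" using M I(2) by auto
  have "Max I \<le> k" "Max I \<noteq> k" using M I(2,3) by auto
  then show "Max I + 1 \<le> k" by simp
  have below: "y + 2 \<le> Max I" if "y \<in> I - {Max I}" for y
  proof -
    have "y \<in> I" "y \<noteq> Max I" using that by auto
    moreover have "y \<le> Max I" "Suc y \<noteq> Max I" using I(1,4) M \<open>y \<in> I\<close> by auto
    ultimately show ?thesis by linarith
  qed
  have "I - {Max I} \<subseteq> {1..k - 2}"
  proof
    fix y assume "y \<in> I - {Max I}"
    then have "1 \<le> y" "y + 2 \<le> Max I" using I(2) below by auto
    then show "y \<in> {1..k - 2}" using \<open>Max I + 1 \<le> k\<close> by simp
  qed
  moreover have "k - 2 \<notin> I - {Max I}"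
  proof
    assume "k - 2 \<in> I - {Max I}"
    then have "k - 2 + 2 \<le> Max I" by (rule below)
    then show False using \<open>Max I + 1 \<le> k\<close> by simp
  qed
  ultimately show "I - {Max I} \<in> adm (k - 2)" using I(4) unfolding adm_def by auto
qed

lemma sorted_list_of_set_Max:
  assumes "finite I" "I \<noteq> {}"
  shows "sorted_list_of_set I = sorted_list_of_set (I - {Max I}) @ [Max I]"
proof -
  let ?l = "sorted_list_of_set (I - {Max I}) @ [Max I]"
  have "\<forall>y\<in>I - {Max I}. y < Max I" using assms by (auto simp: order.not_eq_order_implies_strict)
  then have "sorted_wrt (<) ?l" using assms by (simp add: sorted_wrt_append)
  moreover have "set ?l = I" using Max_in[OF assms] assms by (simp add: insert_absorb)
  ultimately show ?thesis
    using sorted_list_of_set_unique[OF assms(1), of ?l] card_Suc_Diff1[OF assms(1) Max_in[OF assms]]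
    by simp
qed

lemma capI_Max:
  "finite I \<Longrightarrow> I \<noteq> {} \<Longrightarrow> capI I = (Max I - 1, Cap) # capI (I - {Max I})"
  unfolding capI_def by (simp add: sorted_list_of_set_Max)

lemma cupI_Max:
  "finite I \<Longrightarrow> I \<noteq> {} \<Longrightarrow> cupI I = cupI (I - {Max I}) @ [(Max I - 1, Cup)]"
  unfolding cupI_def by (simp add: sorted_list_of_set_Max)

lemma capI_empty[simp]: "capI {} = []"
  by (simp add: capI_def)

lemma cupI_empty[simp]: "cupI {} = []"
  by (simp add: cupI_def)

lemma cap_word_capI: "cap_word (capI I)"
  by (auto simp: capI_def cap_word_def)

lemma cup_word_cupI: "cup_word (cupI I)"
  by (auto simp: cupI_def cup_word_def)

lemma typed_capI_cupI:
  assumes "I \<in> adm k"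
  shows "2 * card I \<le> k" "typed k (k - 2 * card I) (capI I)" "typed (k - 2 * card I) k (cupI I)"
proof -
  have "2 * card I \<le> k \<and> typed k (k - 2 * card I) (capI I) \<and> typed (k - 2 * card I) k (cupI I)"
    using assms
  proof (induction "card I" arbitrary: I k)
    case 0
    then show ?case using finite_adm_member by (auto simp: capI_def cupI_def)
  next
    case (Suc c)
    let ?J = "I - {Max I}"
    have I: "finite I" "I \<noteq> {}" using Suc.hyps(2) finite_adm_member[OF Suc.prems] by auto
    note M = adm_Max[OF Suc.prems I(2)]
    have card: "card I = Suc (card ?J)" using card_Suc_Diff1[OF I(1) Max_in[OF I]] by simp
    then have "c = card ?J" using Suc.hyps(2) by simp
    then have IH: "2 * card ?J \<le> k - 2" "typed (k - 2) (k - 2 - 2 * card ?J) (capI ?J)"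
        "typed (k - 2 - 2 * card ?J) (k - 2) (cupI ?J)"
      using Suc.hyps(1)[OF _ M(3)] by blast+
    have k: "k - 2 - 2 * card ?J = k - 2 * card I" "2 * card I \<le> k" "Max I - 1 + 2 \<le> k"
      using card IH(1) M(1,2) by linarith+
    have "typed k (k - 2 * card I) ((Max I - 1, Cap) # capI ?J)"
      using IH(2) k by simp
    moreover have "typed (k - 2) k [(Max I - 1, Cup)]" using k(3) by auto
    then have "typed (k - 2 * card I) k (cupI ?J @ [(Max I - 1, Cup)])"
      using typed_append[OF IH(3)] k(1) by simp
    ultimately show ?case using k(2) by (simp only: capI_Max[OF I] cupI_Max[OF I])
  qed
  then show "2 * card I \<le> k" "typed k (k - 2 * card I) (capI I)" "typed (k - 2 * card I) k (cupI I)"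
    by auto
qed

lemma typed_hat_word:
  assumes "I \<in> adm k" "typed m k v" "typed k n u"
  shows "typed m n (v @ capI I @ cupI I @ u)"
  using typed_capI_cupI(2,3)[OF assms(1)] assms(2,3) by (blast intro: typed_append)

lemma hat_vec_leading_term:
  "hat_vec v k u =
    (\<lambda>w. dlt (v @ u) w + (\<Sum>I\<in>adm k - {{}}. (-1) ^ card I * dlt (v @ capI I @ cupI I @ u) w))"
  unfolding hat_vec_def by (rule ext) (simp add: sum.remove[OF finite_adm empty_in_adm])

lemma hat_vec_free_vec:
  assumes "typed m k v" "typed k n u"
  shows "(hat_vec v k u :: word \<Rightarrow> 'k::field) \<in> free_vec m n"
proof -
  have support: "{w. (hat_vec v k u :: word \<Rightarrow> 'k) w \<noteq> 0} \<subseteq> (\<lambda>I. v @ capI I @ cupI I @ u) ` adm k"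
  proof
    fix w assume "w \<in> {w. (hat_vec v k u :: word \<Rightarrow> 'k) w \<noteq> 0}"
    then have "(\<Sum>I\<in>adm k. (-1) ^ card I * dlt (v @ capI I @ cupI I @ u) w :: 'k) \<noteq> 0"
      by (simp add: hat_vec_def)
    then obtain I where I: "I \<in> adm k" "(-1) ^ card I * dlt (v @ capI I @ cupI I @ u) w \<noteq> (0::'k)"
      by (meson sum.neutral)
    then have "w = v @ capI I @ cupI I @ u" by (simp add: dlt_def split: if_splits)
    then show "w \<in> (\<lambda>I. v @ capI I @ cupI I @ u) ` adm k" using I(1) by blast
  qed
  have "finite {w. (hat_vec v k u :: word \<Rightarrow> 'k) w \<noteq> 0}"
    by (rule finite_subset[OF support]) (simp add: finite_adm)
  moreover have "\<forall>w. (hat_vec v k u :: word \<Rightarrow> 'k) w \<noteq> 0 \<longrightarrow> typed m n w"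
    using support typed_hat_word[OF _ assms] by blast
  ultimately show ?thesis unfolding free_vec_def by simp
qed

lemma tl_eq_hat_vec:
  assumes "tl_eq m k (dlt v :: word \<Rightarrow> 'k::field) (dlt v')" "tl_eq k n (dlt u :: word \<Rightarrow> 'k) (dlt u')"
    "typed m k v'" "typed k n u"
  shows "tl_eq m n (hat_vec v k u :: word \<Rightarrow> 'k) (hat_vec v' k u')"
  unfolding hat_vec_def
proof (rule tl_eq_sum[OF finite_adm], rule tl_eq_scale)
  fix I assume I: "I \<in> adm k"
  have middle: "typed k k (capI I @ cupI I)" using typed_capI_cupI[OF I] typed_append by blast
  have "tl_eq m n (dlt (v @ (capI I @ cupI I @ u)) :: word \<Rightarrow> 'k) (dlt (v' @ (capI I @ cupI I @ u)))"
    using tl_eq_append_dlt[OF assms(1)] typed_append[OF middle assms(4)] by simp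
  also have "tl_eq m n \<dots> (dlt ((v' @ capI I @ cupI I) @ u'))"
    using tl_eq_prepend_dlt[OF typed_append[OF assms(3) middle] assms(2)] by simp
  finally show "tl_eq m n (dlt (v @ capI I @ cupI I @ u) :: word \<Rightarrow> 'k) (dlt (v' @ capI I @ cupI I @ u'))"
    by simp
qed

section \<open>Spanning\<close>

definition span_modulo :: "nat \<Rightarrow> nat \<Rightarrow> (word \<Rightarrow> 'k::field) set \<Rightarrow> (word \<Rightarrow> 'k) set" where
  "span_modulo m n B = {f. \<exists>g\<in>lin_span B. tl_eq m n f g}"

lemma span_modulo_tl_eq: "tl_eq m n f g \<Longrightarrow> g \<in> span_modulo m n B \<Longrightarrow> f \<in> span_modulo m n B"
  unfolding span_modulo_def by (blast intro: tl_eq_trans)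

lemma span_modulo_base: "h \<in> B \<Longrightarrow> h \<in> span_modulo m n B"
  unfolding span_modulo_def by (blast intro: lin_span_base tl_eq_refl)

lemma span_modulo_zero: "tl_eq m n f (\<lambda>_. 0) \<Longrightarrow> f \<in> span_modulo m n B"
  unfolding span_modulo_def using lin_span_zero by blast

lemma span_modulo_add:
  assumes "f \<in> span_modulo m n B" "g \<in> span_modulo m n B"
  shows "(\<lambda>w. f w + a * g w) \<in> span_modulo m n B"
  using assms unfolding span_modulo_def by (blast intro: lin_span_add tl_eq_add)

lemma span_modulo_sum:
  "finite A \<Longrightarrow> (\<And>x. x \<in> A \<Longrightarrow> g x \<in> span_modulo m n B) \<Longrightarrow>
    (\<lambda>w. \<Sum>x\<in>A. c x * g x w) \<in> span_modulo m n B"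
proof (induction A rule: finite_induct)
  case empty
  then show ?case by (simp add: span_modulo_zero tl_eq_refl)
next
  case (insert x A)
  then have "(\<lambda>w. (\<Sum>x\<in>A. c x * g x w) + c x * g x w) \<in> span_modulo m n B"
    by (intro span_modulo_add) auto
  then show ?case using insert(1,2) by (simp add: add.commute)
qed

text \<open>\<open>x\<close> is \<open>x\<close>-hat minus diagrams with fewer through-strands.\<close>

lemma cap_cup_in_span_modulo:
  "cap_word v \<Longrightarrow> cup_word u \<Longrightarrow> typed m k v \<Longrightarrow> typed k n u \<Longrightarrow>
    (dlt (v @ u) :: word \<Rightarrow> 'k::field) \<in> span_modulo m n (hat_set m n)"
proof (induction k arbitrary: v u rule: less_induct)
  case (less k)
  show ?case
  proof (cases "tl_eq m n (dlt (v @ u)) (\<lambda>_. 0 :: 'k)")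
    case True
    then show ?thesis by (rule span_modulo_zero)
  next
    case False
    have "(hat_vec v k u :: word \<Rightarrow> 'k) \<in> hat_set m n"
      unfolding hat_set_def using False less.prems typed_append tl_eq_refl by blast
    then have hat: "(hat_vec v k u :: word \<Rightarrow> 'k) \<in> span_modulo m n (hat_set m n)"
      by (rule span_modulo_base)
    have "(dlt (v @ capI I @ cupI I @ u) :: word \<Rightarrow> 'k) \<in> span_modulo m n (hat_set m n)"
      if "I \<in> adm k - {{}}" for I
    proof -
      have "card I > 0" using that finite_adm_member by (auto simp: card_gt_0_iff)
      then have "k - 2 * card I < k" using typed_capI_cupI(1)[of I k] that by simp
      then show ?thesis
        using less.IH[of "k - 2 * card I" "v @ capI I" "cupI I @ u"] less.prems
          typed_capI_cupI(2,3)[of I k] that cap_word_capI cup_word_cupI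
        by (auto intro: typed_append)
    qed
    then have lower: "(\<lambda>w. \<Sum>I\<in>adm k - {{}}. (-1) ^ card I * dlt (v @ capI I @ cupI I @ u) w :: 'k)
        \<in> span_modulo m n (hat_set m n)"
      by (intro span_modulo_sum) (auto simp: finite_adm)
    show ?thesis
      using span_modulo_add[OF hat lower, of "-1"] by (simp add: hat_vec_leading_term)
  qed
qed

lemma free_vec_in_span_modulo:
  assumes "f \<in> free_vec m n"
  shows "(f :: word \<Rightarrow> 'k::field) \<in> span_modulo m n (hat_set m n)"
proof -
  let ?S = "{w. f w \<noteq> 0}"
  have S: "finite ?S" "\<And>w. w \<in> ?S \<Longrightarrow> typed m n w" using assms unfolding free_vec_def by auto
  have "(dlt w :: word \<Rightarrow> 'k) \<in> span_modulo m n (hat_set m n)" if "typed m n w" for w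
    using normalizable_word[OF that, where 'k = 'k] unfolding normalizable_def
    by (blast intro: span_modulo_zero span_modulo_tl_eq cap_cup_in_span_modulo)
  then have "(\<lambda>w. \<Sum>x\<in>?S. f x * dlt x w) \<in> span_modulo m n (hat_set m n)"
    using S by (intro span_modulo_sum) auto
  moreover have "(\<lambda>w. \<Sum>x\<in>?S. f x * dlt x w) = f"
  proof
    fix w
    have "(\<Sum>x\<in>?S. f x * dlt x w) = (\<Sum>x\<in>?S. if x = w then f w else 0)"
      by (rule sum.cong) (auto simp: dlt_def)
    then show "(\<Sum>x\<in>?S. f x * dlt x w) = f w" using S(1) by simp
  qed
  ultimately show ?thesis by simp
qed

section \<open>Independence\<close>

text \<open>Triangularity: the other summands of \<open>x\<close>-hat have fewer through-strands than \<open>x\<close>.\<close>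

lemma diagram_coeff_hat_vec:
  assumes "cap_word v" "cup_word u" "typed m k v" "typed k n u" "k \<le> through_count D"
  shows "diagram_coeff m D (hat_vec v k u :: word \<Rightarrow> 'k::field) = (if diagram m (v @ u) = Some D then 1 else 0)"
proof -
  let ?x = "\<lambda>I. v @ capI I @ cupI I @ u"
  have lower: "diagram_coeff m D (dlt (?x I) :: word \<Rightarrow> 'k) = 0" if "I \<in> adm k - {{}}" for I
  proof -
    have "card I > 0" using that finite_adm_member by (auto simp: card_gt_0_iff)
    moreover have "typed m (k - 2 * card I) (v @ capI I)" "typed (k - 2 * card I) n (cupI I @ u)"
      "cap_word (v @ capI I)" "cup_word (cupI I @ u)"
      using assms typed_capI_cupI(2,3)[of I k] that cap_word_capI cup_word_cupI
      by (auto intro: typed_append)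
    then obtain D' where "diagram m ((v @ capI I) @ (cupI I @ u)) = Some D'"
      "through_count D' = k - 2 * card I"
      using through_count_cap_cup by metis
    ultimately show ?thesis
      using assms(5) typed_capI_cupI(1)[of I k] that by (auto simp: diagram_coeff_dlt)
  qed
  have "diagram_coeff m D (hat_vec v k u :: word \<Rightarrow> 'k) = diagram_coeff m D
      (\<lambda>w. dlt (v @ u) w + 1 * (\<Sum>I\<in>adm k - {{}}. (-1) ^ card I * dlt (?x I) w :: 'k))"
    by (simp add: hat_vec_leading_term)
  also have "\<dots> = diagram_coeff m D (dlt (v @ u) :: word \<Rightarrow> 'k)
      + 1 * diagram_coeff m D (\<lambda>w. \<Sum>I\<in>adm k - {{}}. (-1) ^ card I * dlt (?x I) w :: 'k)"
    by (rule diagram_coeff_add) (auto intro!: finite_support_sum finite_support_dlt simp: finite_adm)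
  also have "diagram_coeff m D (\<lambda>w. \<Sum>I\<in>adm k - {{}}. (-1) ^ card I * dlt (?x I) w :: 'k) = 0"
    by (simp add: diagram_coeff_sum finite_adm finite_support_dlt lower)
  finally show ?thesis by (simp add: diagram_coeff_dlt)
qed

lemma tl_eq_hat_vec_of_diagram:
  assumes "cap_word v" "cup_word u" "typed m k v" "typed k n u"
    "cap_word v'" "cup_word u'" "typed m k' v'" "typed k' n u'"
    "diagram m (v @ u) = diagram m (v' @ u')"
  shows "tl_eq m n (hat_vec v k u :: word \<Rightarrow> 'k::field) (hat_vec v' k' u')"
proof -
  obtain P U where PU: "read_word ({}, map Src [0..<m]) v = Some (P, U)" "list_all is_src U" "length U = k"
     "diagram m (v @ u) = Some (P, ins_cups U u)"
    using diagram_cap_cup[OF assms(1-4)] by blast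
  obtain P' U' where PU': "read_word ({}, map Src [0..<m]) v' = Some (P', U')" "list_all is_src U'"
     "length U' = k'" "diagram m (v' @ u') = Some (P', ins_cups U' u')"
    using diagram_cap_cup[OF assms(5-8)] by blast
  have P: "P = P'" and cups: "ins_cups U u = ins_cups U' u'" using PU(4) PU'(4) assms(9) by auto
  have "filter is_src (ins_cups U u) = filter is_src (ins_cups U' u')" using cups by simp
  then have U: "U = U'" using PU(2) PU'(2) by (simp add: filter_ins_cups list_all_iff)
  then have k: "k' = k" using PU(3) PU'(3) by simp
  have "typed (length (map Src [0..<m])) k v" "typed (length (map Src [0..<m])) k v'"
    using assms(3,7) k by simp_all
  then have "tl_eq (length (map Src [0..<m])) k (dlt v :: word \<Rightarrow> 'k) (dlt v')"
    using tl_eq_cap_words[OF cap_inv_input assms(1,5)] PU(1) PU'(1) P by blast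
  then have "tl_eq m k (dlt v :: word \<Rightarrow> 'k) (dlt v')" by simp
  moreover have "tl_eq k n (dlt u :: word \<Rightarrow> 'k) (dlt u')"
    using tl_eq_cup_words[OF assms(2,6) _ _ PU(2)] cups U PU(3) assms(4,8) k by simp
  ultimately show ?thesis using tl_eq_hat_vec assms(4,7) k by simp
qed

lemma diagram_coeff_hat_vec_eq_zero:
  assumes "cap_word v" "cup_word u" "typed m k v" "typed k n u"
    "cap_word v0" "cup_word u0" "typed m k0 v0" "typed k0 n u0" "k \<le> k0"
    "diagram m (v0 @ u0) = Some D" "through_count D = k0"
    "\<not> tl_eq m n (hat_vec v k u :: word \<Rightarrow> 'k::field) (hat_vec v0 k0 u0)"
  shows "diagram_coeff m D (hat_vec v k u :: word \<Rightarrow> 'k) = 0"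
proof -
  have "diagram m (v @ u) \<noteq> Some D"
    using tl_eq_hat_vec_of_diagram[OF assms(1-8)] assms(10,12) by auto
  moreover have "diagram_coeff m D (hat_vec v k u :: word \<Rightarrow> 'k)
      = (if diagram m (v @ u) = Some D then 1 else 0)"
    by (rule diagram_coeff_hat_vec) (use assms in auto)
  ultimately show ?thesis by simp
qed

lemma hat_set_memberE:
  assumes "h \<in> hat_set m n"
  obtains v k u where "h = hat_vec v k u" "cap_word v" "cup_word u" "typed m k v" "typed k n u"
  using assms unfolding hat_set_def by blast

lemma hat_set_subset_free_vec: "hat_set m n \<subseteq> free_vec m n"
  by (auto elim!: hat_set_memberE intro: hat_vec_free_vec)

lemma hat_set_representatives:
  assumes "F \<subseteq> (hat_set m n :: (word \<Rightarrow> 'k::field) set)"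
  obtains V K U where "\<And>h. h \<in> F \<Longrightarrow> hat_vec (V h) (K h) (U h) = h"
    "\<And>h. h \<in> F \<Longrightarrow> cap_word (V h) \<and> cup_word (U h) \<and> typed m (K h) (V h) \<and> typed (K h) n (U h)"
proof -
  have "\<exists>v k u. hat_vec v k u = h \<and> cap_word v \<and> cup_word u \<and> typed m k v \<and> typed k n u"
    if "h \<in> F" for h :: "word \<Rightarrow> 'k"
    using subsetD[OF assms that] by (elim hat_set_memberE) blast
  then show ?thesis using that by metis
qed

lemma hat_set_independent:
  assumes "finite F" "F \<subseteq> (hat_set m n :: (word \<Rightarrow> 'k::field) set)"
    "\<forall>h\<in>F. \<forall>h'\<in>F. h \<noteq> h' \<longrightarrow> \<not> tl_eq m n h h'" "lin_comb F c \<in> tl_ideal m n"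
  shows "\<forall>h\<in>F. c h = 0"
proof (rule ccontr)
  assume "\<not> (\<forall>h\<in>F. c h = 0)"
  obtain V K U where rep: "\<And>h. h \<in> F \<Longrightarrow> hat_vec (V h) (K h) (U h) = h"
    and words: "\<And>h. h \<in> F \<Longrightarrow> cap_word (V h) \<and> cup_word (U h) \<and> typed m (K h) (V h) \<and> typed (K h) n (U h)"
    using hat_set_representatives[OF assms(2)] by blast
  define S where "S = {h\<in>F. c h \<noteq> 0}"
  have S: "finite S" "S \<noteq> {}" "S \<subseteq> F"
    using assms(1) \<open>\<not> (\<forall>h\<in>F. c h = 0)\<close> unfolding S_def by auto
  text \<open>A summand with the most through-strands is the only one seen by its own diagram.\<close>
  have "Max (K ` S) \<in> K ` S" using S by (intro Max_in) auto
  then obtain h0 where h0: "h0 \<in> S" "K h0 = Max (K ` S)" by (metis imageE)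
  have h0F: "h0 \<in> F" using h0(1) S(3) by blast
  obtain D where D: "diagram m (V h0 @ U h0) = Some D" "through_count D = K h0"
    by (rule through_count_cap_cup[of "V h0" "U h0" m "K h0" n]) (use words[OF h0F] in auto)
  have coeff: "c h * diagram_coeff m D h = (if h = h0 then c h0 else 0)" if "h \<in> F" for h
  proof (cases "h = h0")
    case True
    have "diagram_coeff m D (hat_vec (V h0) (K h0) (U h0) :: word \<Rightarrow> 'k) = 1"
      by (subst diagram_coeff_hat_vec) (use words[OF h0F] D in auto)
    then show ?thesis using True rep[OF h0F] by simp
  next
    case False
    have "diagram_coeff m D h = 0" if "c h \<noteq> 0"
    proof -
      have "K h \<le> K h0" using h0(2) S(1) \<open>h \<in> F\<close> that unfolding S_def by simp
      moreover have "\<not> tl_eq m n (hat_vec (V h) (K h) (U h) :: word \<Rightarrow> 'k) (hat_vec (V h0) (K h0) (U h0))"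
        using assms(3) \<open>h \<in> F\<close> h0F False rep[OF \<open>h \<in> F\<close>] rep[OF h0F] by simp
      ultimately have "diagram_coeff m D (hat_vec (V h) (K h) (U h) :: word \<Rightarrow> 'k) = 0"
        using diagram_coeff_hat_vec_eq_zero words[OF \<open>h \<in> F\<close>] words[OF h0F] D by blast
      then show ?thesis using rep[OF \<open>h \<in> F\<close>] by simp
    qed
    then show ?thesis using False by auto
  qed
  have "0 = diagram_coeff m D (lin_comb F c)"
    using diagram_coeff_tl_ideal[OF assms(4)] by simp
  also have "\<dots> = (\<Sum>h\<in>F. c h * diagram_coeff m D h)"
    unfolding lin_comb_def using assms(1,2) hat_set_subset_free_vec
    by (intro diagram_coeff_sum) (auto simp: free_vec_def)
  also have "\<dots> = c h0" using coeff h0F assms(1) by (simp cong: sum.cong)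
  finally show False using h0(1) unfolding S_def by simp
qed

theorem mainTheorem9:
  fixes m n :: nat
  shows "basis_of_hom m n (hat_set m n :: (word \<Rightarrow> 'k::field) set)"
  unfolding basis_of_hom_def
proof (intro conjI)
  show "hat_set m n \<subseteq> free_vec m n" by (rule hat_set_subset_free_vec)
  show "\<forall>f\<in>free_vec m n. \<exists>F c. finite F \<and> F \<subseteq> (hat_set m n :: (word \<Rightarrow> 'k) set) \<and>
      tl_eq m n f (lin_comb F c)"
  proof
    fix f :: "word \<Rightarrow> 'k"
    assume "f \<in> free_vec m n"
    then obtain g where "g \<in> lin_span (hat_set m n)" "tl_eq m n f g"
      using free_vec_in_span_modulo unfolding span_modulo_def by blast
    then show "\<exists>F c. finite F \<and> F \<subseteq> hat_set m n \<and> tl_eq m n f (lin_comb F c)"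
      unfolding lin_span_def by blast
  qed
qed (use hat_set_independent in blast)

end
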